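(* For every vertex $j$ and every $t\ge0$, $\mathcal F_j(t)=\sum_{k=1}^N p_{kj}(t)\,|\alpha_{kj}(t)|^2$, and the conditional QC-distance satisfies, as $t\to0^+$, $$D_{QC}(t\,|\,j)=d_j\,t+O(t^2).$$ Consequently $D_{QC}(t)=\big(\max_j d_j\big)\,t+O(t^2)$ and $\frac1N\sum_{j=1}^N D_{QC}(t|j)=\bar d\,t+O(t^2)$ as $t\to0^+$, where $\bar d=\frac1N\sum_j d_j$ is the average degree.
   Context: $G$ is a finite simple undirected graph with vertices $\{1,\dots,N\}$, degrees $d_j$, and Laplacian $L$ ($L_{jk}=1$ if $j\ne k$ adjacent, $0$ if $j\ne k$ non-adjacent, $L_{jj}=-d_j$). Let $p_{kj}(t)=\langle k|e^{Lt}|j\rangle$ and $\alpha_{kj}(t)=\langle k|e^{iLt}|j\rangle$. For $\rho_j=|j\rangle\langle j|$, $\mathcal E_{\mathrm C}(\rho_j)=\sum_k p_{kj}(t)|k\rangle\langle k|$ and $\mathcal E_{\mathrm Q}(\rho_j)=|\psi_j(t)\rangle\langle\psi_j(t)|$ with $|\psi_j(t)\rangle=\sum_k\alpha_{kj}(t)|k\rangle$. $\mathcal F_j(t)=\mathcal F(\mathcal E_{\mathrm C}(\rho_j),\mathcal E_{\mathrm Q}(\rho_j))$ with Uhlmann fidelity $\mathcal F(\rho_1,\rho_2)=[\mathrm{Tr}\sqrt{\sqrt{\rho_1}\rho_2\sqrt{\rho_1}}]^2$, and $D_{QC}(t|j)=1-\mathcal F_j(t)$. The QC-distance is $D_{QC}(t)=1-\min_{\rho_{\mathrm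 C}}\mathcal F(\mathcal E_{\mathrm C}(\rho_{\mathrm C}),\mathcal E_{\mathrm Q}(\rho_{\mathrm C}))$ over diagonal density matrices, where $\mathcal E_{\mathrm C}(\rho)=\sum_k(\sum_j p_{kj}(t)\rho_{jj})|k\rangle\langle k|$ and $\mathcal E_{\mathrm Q}(\rho)=e^{iLt}\rho e^{-iLt}$. *)

theory Defs
  imports "HOL-Analysis.Analysis" "HOL-Library.Landau_Symbols"
begin

(* Simple undirected graph on the finite vertex type 'n (N = CARD('n)),
   given by a symmetric irreflexive adjacency relation E. *)
definition simple_graph :: "('n::finite \<Rightarrow> 'n \<Rightarrow> bool) \<Rightarrow> bool" where
  "simple_graph E \<longleftrightarrow> (\<forall>j k. E j k = E k j) \<and> (\<forall>j. \<not> E j j)"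

definition degree :: "('n::finite \<Rightarrow> 'n \<Rightarrow> bool) \<Rightarrow> 'n \<Rightarrow> nat" where
  "degree E j = card {k. E j k}"

definition laplacian :: "('n::finite \<Rightarrow> 'n \<Rightarrow> bool) \<Rightarrow> real^'n^'n" where
  "laplacian E = (\<chi> j k. if j = k then - real (degree E j) else if E j k then 1 else 0)"

primrec mpow :: "'a::semiring_1^'n^'n \<Rightarrow> nat \<Rightarrow> 'a^'n^'n" where
  "mpow A 0 = mat 1"
| "mpow A (Suc m) = A ** mpow A m"

definition mexp :: "'a::{real_normed_field,banach}^'n^'n \<Rightarrow> 'a^'n^'n" where
  "mexp A = (\<chi> i j. \<Sum>m. (mpow A m $ i $ j) / fact m)"

definition pC :: "('n::finite \<Rightarrow> 'n \<Rightarrow> bool) \<Rightarrow> real \<Rightarrow> 'n \<Rightarrow> 'n \<Rightarrow> real" where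
  "pC E t k j = mexp (t *\<^sub>R laplacian E) $ k $ j"

definition UQ :: "('n::finite \<Rightarrow> 'n \<Rightarrow> bool) \<Rightarrow> real \<Rightarrow> complex^'n^'n" where
  "UQ E t = mexp (\<chi> i j. \<i> * complex_of_real t * complex_of_real (laplacian E $ i $ j))"

definition alphaQ :: "('n::finite \<Rightarrow> 'n \<Rightarrow> bool) \<Rightarrow> real \<Rightarrow> 'n \<Rightarrow> 'n \<Rightarrow> complex" where
  "alphaQ E t k j = UQ E t $ k $ j"

definition adjointM :: "complex^'n^'n \<Rightarrow> complex^'n^'n" where
  "adjointM A = (\<chi> i j. cnj (A $ j $ i))"

definition psd :: "complex^'n::finite^'n \<Rightarrow> bool" where
  "psd A \<longleftrightarrow> adjointM A = A \<and>
     (\<forall>v :: complex^'n. 0 \<le> Re (\<Sum>i\<in>UNIV. \<Sum>j\<in>UNIV. cnj (v $ i) * A $ i $ j * v $ j))"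

definition psd_sqrt :: "complex^'n::finite^'n \<Rightarrow> complex^'n^'n" where
  "psd_sqrt A = (THE S. psd S \<and> S ** S = A)"

definition fidelity :: "complex^'n::finite^'n \<Rightarrow> complex^'n^'n \<Rightarrow> real" where
  "fidelity r1 r2 = (Re (trace (psd_sqrt (psd_sqrt r1 ** r2 ** psd_sqrt r1)))) ^ 2"

definition diagM :: "('n::finite \<Rightarrow> complex) \<Rightarrow> complex^'n^'n" where
  "diagM f = (\<chi> i j. if i = j then f i else 0)"

definition ECl :: "('n::finite \<Rightarrow> 'n \<Rightarrow> bool) \<Rightarrow> real \<Rightarrow> ('n \<Rightarrow> real) \<Rightarrow> complex^'n^'n" where
  "ECl E t q = diagM (\<lambda>k. complex_of_real (\<Sum>j\<in>UNIV. pC E t k j * q j))"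

definition EQu :: "('n::finite \<Rightarrow> 'n \<Rightarrow> bool) \<Rightarrow> real \<Rightarrow> complex^'n^'n \<Rightarrow> complex^'n^'n" where
  "EQu E t rho = UQ E t ** rho ** adjointM (UQ E t)"

(* E_C(rho_j) and E_Q(rho_j) = |psi_j(t)><psi_j(t)| as in the paper *)
definition ECj :: "('n::finite \<Rightarrow> 'n \<Rightarrow> bool) \<Rightarrow> real \<Rightarrow> 'n \<Rightarrow> complex^'n^'n" where
  "ECj E t j = diagM (\<lambda>k. complex_of_real (pC E t k j))"

definition EQj :: "('n::finite \<Rightarrow> 'n \<Rightarrow> bool) \<Rightarrow> real \<Rightarrow> 'n \<Rightarrow> complex^'n^'n" where
  "EQj E t j = (\<chi> k l. alphaQ E t k j * cnj (alphaQ E t l j))"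

definition Fj :: "('n::finite \<Rightarrow> 'n \<Rightarrow> bool) \<Rightarrow> real \<Rightarrow> 'n \<Rightarrow> real" where
  "Fj E t j = fidelity (ECj E t j) (EQj E t j)"

definition DQC_cond :: "('n::finite \<Rightarrow> 'n \<Rightarrow> bool) \<Rightarrow> real \<Rightarrow> 'n \<Rightarrow> real" where
  "DQC_cond E t j = 1 - Fj E t j"

(* diagonal density matrices, parametrised by their diagonal q (q \<ge> 0, sum q = 1) *)
definition prob_vecs :: "('n::finite \<Rightarrow> real) set" where
  "prob_vecs = {q. (\<forall>j. 0 \<le> q j) \<and> (\<Sum>j\<in>UNIV. q j) = 1}"

definition DQC :: "('n::finite \<Rightarrow> 'n \<Rightarrow> bool) \<Rightarrow> real \<Rightarrow> real" where
  "DQC E t = 1 - (INF q\<in>prob_vecs. fidelity (ECl E t q)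
                     (EQu E t (diagM (\<lambda>j. complex_of_real (q j)))))"

end

theory Submission
  imports Defs
begin

text \<open>
  Both walks start at the identity: entrywise \<open>e\<^sup>t\<^sup>L = I + t L + O(t\<^sup>2)\<close> and
  \<open>e\<^sup>i\<^sup>t\<^sup>L = I + i t L + O(t\<^sup>2)\<close>, and \<open>p\<^sub>k\<^sub>j(t) \<ge> 0\<close> because \<open>L\<close> has nonnegative
  off-diagonal entries. Since the quantum output \<open>|\<psi>\<^sub>j\<rangle>\<langle>\<psi>\<^sub>j|\<close> is pure, the Uhlmann fidelity
  collapses to \<open>\<langle>\<psi>\<^sub>j| \<rho>\<^sub>C |\<psi>\<^sub>j\<rangle> = \<Sum>\<^sub>k p\<^sub>k\<^sub>j |\<alpha>\<^sub>k\<^sub>j|\<^sup>2\<close>. Its diagonal term is \<open>1 - d\<^sub>j t + O(t\<^sup>2)\<close>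
  and each off-diagonal term is \<open>O(t) O(t)\<^sup>2\<close>, whence \<open>D\<^sub>Q\<^sub>C(t|j) = d\<^sub>j t + O(t\<^sup>2)\<close>.

  For a general diagonal input \<open>q\<close>, the fidelity is bounded below through \<open>Re tr Y \<le> tr |Y|\<close>
  with \<open>Y = \<surd>D\<^sub>q U\<^sup>* \<surd>\<rho>\<^sub>C\<close>, \<open>U = e\<^sup>i\<^sup>t\<^sup>L\<close>; this gives \<open>F \<ge> (\<Sum>\<^sub>k q\<^sub>k \<surd>p\<^sub>k\<^sub>k Re \<alpha>\<^sub>k\<^sub>k)\<^sup>2 \<ge>
  1 - (max\<^sub>k d\<^sub>k) t - O(t\<^sup>2)\<close>, and a vertex of maximal degree shows this is sharp. The square roots
  in Uhlmann's formula exist by the spectral theorem for Hermitian matrices, proved here by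
  maximising the Rayleigh quotient on orthogonal complements.
\<close>

definition cinner :: "complex^'n::finite \<Rightarrow> complex^'n \<Rightarrow> complex" where
  "cinner x y = (\<Sum>i\<in>UNIV. cnj (x $ i) * y $ i)"

lemma cinner_add_left: "cinner (x + y) z = cinner x z + cinner y z"
  by (simp add: cinner_def distrib_right sum.distrib)

lemma cinner_add_right: "cinner x (y + z) = cinner x y + cinner x z"
  by (simp add: cinner_def distrib_left sum.distrib)

lemma cinner_diff_right: "cinner x (y - z) = cinner x y - cinner x z"
  by (simp add: cinner_def right_diff_distrib sum_subtractf)

lemma cinner_scale_left: "cinner (c *s x) y = cnj c * cinner x y"
  by (simp add: cinner_def sum_distrib_left algebra_simps)

lemma cinner_scale_right: "cinner x (c *s y) = c * cinner x y"
  by (simp add: cinner_def sum_distrib_left algebra_simps)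

lemma cinner_zero_right [simp]: "cinner x 0 = 0"
  by (simp add: cinner_def)

lemma cinner_sum_right: "cinner x (sum f S) = (\<Sum>s\<in>S. cinner x (f s))"
  by (induction S rule: infinite_finite_induct) (simp_all add: cinner_add_right)

lemma cinner_commute: "cinner y x = cnj (cinner x y)"
  by (simp add: cinner_def mult.commute)

lemma cinner_axis_left: "cinner (axis k 1) y = y $ k"
  by (simp add: cinner_def axis_def if_distrib if_distribR cong: if_cong)

lemma cinner_axis_right: "cinner x (axis k 1) = cnj (x $ k)"
  using cinner_commute[of x "axis k 1"] by (simp add: cinner_axis_left)

lemma power2_norm_vec_complex: "(norm (x::complex^'n::finite))^2 = (\<Sum>i\<in>UNIV. (cmod (x $ i))^2)"
  by (simp add: power2_norm_eq_inner inner_vec_def)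

lemma cinner_self: "cinner x x = complex_of_real ((norm x)^2)"
  unfolding power2_norm_vec_complex cinner_def of_real_sum
  by (intro sum.cong refl) (metis complex_norm_square mult.commute of_real_power)

lemma cinner_self_eq_0: "cinner x x = 0 \<longleftrightarrow> x = 0"
  by (simp add: cinner_self)

lemma Re_cinner: "Re (cinner x y) = inner x y"
  by (simp add: inner_vec_def cinner_def inner_complex_def)

lemma norm_scalar_mult_complex: "norm (c *s (x::complex^'n::finite)) = cmod c * norm x"
  by (simp add: scalar_mult_eq_scaleR norm_vec_def L2_set_def norm_mult power_mult_distrib
      sum_distrib_left[symmetric] real_sqrt_mult)

lemma cmod_cinner_le: "cmod (cinner x y) \<le> norm x * norm y"
proof (cases "cinner x y = 0")
  case False
  define c where "c = cnj (cinner x y) / cmod (cinner x y)"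
  have "cnj (cinner x y) * cinner x y = complex_of_real ((cmod (cinner x y))^2)"
    by (metis complex_norm_square mult.commute)
  then have "cmod (cinner x y) = inner x (c *s y)"
    using False by (simp add: Re_cinner[symmetric] cinner_scale_right c_def power2_eq_square)
  also have "\<dots> \<le> norm x * norm (c *s y)" by (rule norm_cauchy_schwarz)
  also have "norm (c *s y) = norm y"
    using False by (simp add: norm_scalar_mult_complex c_def norm_divide)
  finally show ?thesis .
qed simp

lemma cinner_adjointM: "cinner x (A *v y) = cinner (adjointM A *v x) y"
  unfolding cinner_def adjointM_def matrix_vector_mult_def
  by (simp add: sum_distrib_left sum_distrib_right algebra_simps) (rule sum.swap)

lemma adjointM_adjointM [simp]: "adjointM (adjointM A) = A"
  by (simp add: adjointM_def vec_eq_iff)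

lemma adjointM_mult: "adjointM (A ** B) = adjointM B ** adjointM A"
  by (simp add: adjointM_def matrix_matrix_mult_def vec_eq_iff mult.commute)

lemma adjointM_diff: "adjointM (A - B) = adjointM A - adjointM B"
  by (simp add: adjointM_def vec_eq_iff)

lemma matrix_eq_0_iff_axis: "(A::'a::semiring_1^'n::finite^'m) = 0 \<longleftrightarrow> (\<forall>k. A *v axis k 1 = 0)"
  by (auto simp: vec_eq_iff matrix_vector_mult_def axis_def if_distrib cong: if_cong)

lemma hermitian_cinner_swap: "adjointM A = A \<Longrightarrow> cinner x (A *v y) = cinner (A *v x) y"
  by (metis cinner_adjointM)

lemma hermitian_form_real: "adjointM A = A \<Longrightarrow> complex_of_real (Re (cinner x (A *v x))) = cinner x (A *v x)"
  using hermitian_cinner_swap[of A x x] cinner_commute[of "A *v x" x]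
  by (metis Reals_cnj_iff of_real_Re)

lemma psd_iff: "psd A \<longleftrightarrow> adjointM A = A \<and> (\<forall>v. 0 \<le> Re (cinner v (A *v v)))"
proof -
  have "(\<Sum>i\<in>UNIV. \<Sum>j\<in>UNIV. cnj (v $ i) * A $ i $ j * v $ j) = cinner v (A *v v)" for v
    by (simp add: cinner_def matrix_vector_mult_def sum_distrib_left mult.assoc)
  then show ?thesis by (simp add: psd_def)
qed

lemma psd_hermitian: "psd A \<Longrightarrow> adjointM A = A"
  by (simp add: psd_iff)

lemma psd_form_nonneg: "psd A \<Longrightarrow> 0 \<le> Re (cinner v (A *v v))"
  by (simp add: psd_iff)

lemma psdI: "adjointM A = A \<Longrightarrow> (\<And>v. 0 \<le> Re (cinner v (A *v v))) \<Longrightarrow> psd A"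
  by (simp add: psd_iff)

lemma linear_coeff_zero_if_nonneg:
  fixes a b :: real
  assumes "\<And>s. 0 \<le> 2 * s * a + s^2 * b"
  shows "a = 0"
proof (rule ccontr)
  assume "a \<noteq> 0"
  define s where "s = - a / (\<bar>b\<bar> + 1)"
  have "2 * s * a + s^2 * b \<le> 2 * s * a + s^2 * (\<bar>b\<bar> + 1)"
    by (intro add_left_mono mult_left_mono) auto
  also have "\<dots> = s * a + s * (a + s * (\<bar>b\<bar> + 1))"
    by (simp add: algebra_simps power2_eq_square)
  also have "\<dots> = - (a^2) / (\<bar>b\<bar> + 1)"
    by (simp add: s_def power2_eq_square)
  also have "\<dots> < 0" using \<open>a \<noteq> 0\<close> by (simp add: divide_neg_pos add_pos_nonneg)
  finally show False using assms[of s] by linarith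
qed

lemma cinner_expand_real_shift:
  "cinner (u + complex_of_real s *s w) (A *v (u + complex_of_real s *s w))
     = cinner u (A *v u) + of_real s * (cinner u (A *v w) + cinner w (A *v u))
       + of_real s ^ 2 * cinner w (A *v w)"
  by (simp add: vector_scalar_commute cinner_add_left cinner_add_right
      cinner_scale_left cinner_scale_right algebra_simps power2_eq_square)

text \<open>Otherwise a small real perturbation of \<open>u\<close> in a direction \<open>w\<close> with \<open>Re \<langle>w, A u\<rangle> \<noteq> 0\<close>
  makes the form negative.\<close>
lemma psd_form_eq_0_imp_kernel:
  assumes "psd A" "Re (cinner u (A *v u)) = 0"
  shows "A *v u = 0"
proof -
  have "Re (cinner w (A *v u)) = 0" for w
  proof (rule linear_coeff_zero_if_nonneg)
    fix s :: real
    have "cinner u (A *v w) = cnj (cinner w (A *v u))"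
      by (metis assms(1) cinner_commute hermitian_cinner_swap psd_hermitian)
    then show "0 \<le> 2 * s * Re (cinner w (A *v u)) + s^2 * Re (cinner w (A *v w))"
      using psd_form_nonneg[OF assms(1), of "u + complex_of_real s *s w"] assms(2)
      by (simp add: cinner_expand_real_shift power2_eq_square)
  qed
  from this[of "A *v u"] show ?thesis by (simp add: cinner_self)
qed

lemma matrix_vector_mult_axis: "(A *v axis k 1) $ i = (A::'a::semiring_1^'n::finite^'m) $ i $ k"
  by (simp add: matrix_vector_mult_def axis_def if_distrib if_distribR cong: if_cong)

lemma trace_eq_sum_cinner_axis: "trace A = (\<Sum>k\<in>UNIV. cinner (axis k 1) (A *v axis k 1))"
  by (simp add: trace_def cinner_axis_left matrix_vector_mult_axis)

lemma matrix_diff_ldistrib: "(A::'a::ring_1^'n::finite^'m) ** (B - C) = A ** B - A ** C"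
  by (simp add: matrix_matrix_mult_def vec_eq_iff right_diff_distrib sum_subtractf)

lemma matrix_diff_rdistrib: "((A::'a::ring_1^'n::finite^'m) - B) ** C = A ** C - B ** C"
  by (simp add: matrix_matrix_mult_def vec_eq_iff left_diff_distrib sum_subtractf)

lemma Re_trace_sandwich:
  assumes "adjointM D = D"
  shows "Re (trace (D ** B ** D)) = (\<Sum>k\<in>UNIV. Re (cinner (D *v axis k 1) (B *v (D *v axis k 1))))"
proof -
  have "cinner x ((D ** B ** D) *v x) = cinner (D *v x) (B *v (D *v x))" for x
    using cinner_adjointM[of x D] assms by (simp flip: matrix_vector_mul_assoc)
  then show ?thesis
    unfolding trace_eq_sum_cinner_axis Re_sum by simp
qed

lemma psd_sandwich_trace_nonneg: "psd B \<Longrightarrow> adjointM D = D \<Longrightarrow> 0 \<le> Re (trace (D ** B ** D))"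
  by (simp add: Re_trace_sandwich psd_form_nonneg sum_nonneg)

lemma psd_sandwich_trace_eq_0:
  assumes B: "psd B" and D: "adjointM D = D" and tr: "Re (trace (D ** B ** D)) = 0"
  shows "B ** D = 0"
proof -
  define a where "a k = Re (cinner (D *v axis k 1) (B *v (D *v axis k 1)))" for k
  have "\<forall>k\<in>UNIV. a k = 0"
    using tr psd_form_nonneg[OF B] sum_nonneg_eq_0_iff[of UNIV a]
    by (simp add: a_def Re_trace_sandwich[OF D])
  then have "B *v (D *v axis k 1) = 0" for k
    using psd_form_eq_0_imp_kernel[OF B] by (simp add: a_def)
  then show ?thesis
    by (simp add: matrix_eq_0_iff_axis flip: matrix_vector_mul_assoc)
qed

text \<open>With \<open>D = S - T\<close> one has \<open>S D + D T = S\<^sup>2 - T\<^sup>2 = 0\<close>, hence the two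
  nonnegative traces \<open>tr (D S D)\<close> and \<open>tr (D T D) = tr (D D T)\<close> add up to \<open>0\<close>.\<close>
lemma psd_sqrt_unique:
  assumes S: "psd S" and T: "psd T" and eq: "S ** S = T ** T"
  shows "S = T"
proof -
  define D where "D = S - T"
  have D: "adjointM D = D"
    using S T by (simp add: D_def adjointM_diff psd_hermitian)
  have SD_DT: "S ** D + D ** T = 0"
    using eq by (simp add: D_def matrix_diff_ldistrib matrix_diff_rdistrib matrix_mul_assoc)
  have "D ** S ** D + D ** D ** T = D ** (S ** D + D ** T)"
    by (simp add: matrix_add_ldistrib matrix_mul_assoc)
  also have "\<dots> = 0"
    unfolding SD_DT by (simp add: matrix_matrix_mult_def vec_eq_iff)
  finally have "D ** S ** D + D ** D ** T = 0" .
  moreover have "trace (D ** T ** D) = trace (D ** D ** T)"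
    by (metis matrix_mul_assoc trace_mul_sym)
  ultimately have "trace (D ** S ** D) + trace (D ** T ** D) = 0"
    by (metis trace_add trace_0 mat_0)
  then have "Re (trace (D ** S ** D)) + Re (trace (D ** T ** D)) = 0"
    by (metis plus_complex.sel(1) zero_complex.sel(1))
  then have "Re (trace (D ** S ** D)) = 0" "Re (trace (D ** T ** D)) = 0"
    using psd_sandwich_trace_nonneg[OF S D] psd_sandwich_trace_nonneg[OF T D] by linarith+
  then have "D ** D = 0"
    using psd_sandwich_trace_eq_0[OF S D] psd_sandwich_trace_eq_0[OF T D]
    by (simp add: D_def matrix_diff_rdistrib)
  then have "cinner (D *v x) (D *v x) = 0" for x
    using cinner_adjointM[of x D "D *v x"] D by (simp add: matrix_vector_mul_assoc)
  then have "D = 0"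
    by (simp add: cinner_self_eq_0 matrix_eq_0_iff_axis)
  then show ?thesis by (simp add: D_def)
qed

lemma psd_sqrt_eqI: "psd S \<Longrightarrow> S ** S = A \<Longrightarrow> psd_sqrt A = S"
  unfolding psd_sqrt_def by (rule the_equality) (use psd_sqrt_unique in auto)

section \<open>Spectral theorem for Hermitian matrices\<close>

definition orthonormal_eigvecs :: "complex^'n::finite^'n \<Rightarrow> (complex^'n) set \<Rightarrow> bool" where
  "orthonormal_eigvecs A V \<longleftrightarrow> finite V \<and>
     (\<forall>v\<in>V. cinner v v = 1 \<and> (\<exists>c. A *v v = c *s v)) \<and>
     (\<forall>v\<in>V. \<forall>w\<in>V. v \<noteq> w \<longrightarrow> cinner v w = 0)"

definition eigenbasis :: "complex^'n::finite^'n \<Rightarrow> (complex^'n) set \<Rightarrow> bool" where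
  "eigenbasis A V \<longleftrightarrow> orthonormal_eigvecs A V \<and> (\<forall>x. (\<forall>v\<in>V. cinner v x = 0) \<longrightarrow> x = 0)"

lemma orthonormal_eigvecs_eigenvalue:
  assumes "orthonormal_eigvecs A V" "v \<in> V"
  shows "A *v v = cinner v (A *v v) *s v"
proof -
  obtain c where "A *v v = c *s v" "cinner v v = 1"
    using assms unfolding orthonormal_eigvecs_def by blast
  then show ?thesis
    by (simp add: cinner_scale_right)
qed

lemma orthonormal_eigvecs_card_le:
  fixes V :: "(complex^'n::finite) set"
  assumes "orthonormal_eigvecs A V"
  shows "card V \<le> DIM(complex^'n)"
proof -
  have "pairwise orthogonal V"
    using assms unfolding orthonormal_eigvecs_def pairwise_def orthogonal_def
    by (simp add: Re_cinner[symmetric])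
  moreover have "0 \<notin> V"
    using assms unfolding orthonormal_eigvecs_def by force
  ultimately show ?thesis
    using independent_bound pairwise_orthogonal_independent by blast
qed

text \<open>Moving \<open>u\<close> along \<open>g = A u - \<lambda> u\<close>, which is orthogonal to \<open>u\<close>, changes the form to first order
  by \<open>2 s \<parallel>g\<parallel>\<^sup>2\<close>; maximality forces \<open>g = 0\<close>.\<close>
lemma rayleigh_max_imp_eigenvector:
  assumes herm: "adjointM A = A"
    and W: "\<And>x y c. x \<in> W \<Longrightarrow> y \<in> W \<Longrightarrow> x + c *s y \<in> W" "\<And>x. x \<in> W \<Longrightarrow> A *v x \<in> W"
    and u: "u \<in> W" "cinner u u = 1"
    and max: "\<And>y. y \<in> W \<Longrightarrow> Re (cinner y (A *v y)) \<le> Re (cinner u (A *v u)) * (norm y)^2"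
  shows "A *v u = complex_of_real (Re (cinner u (A *v u))) *s u"
proof -
  define lam where "lam = Re (cinner u (A *v u))"
  define g where "g = A *v u - complex_of_real lam *s u"
  have "g \<in> W"
    using W(1)[OF W(2)[OF u(1)] u(1), of "- complex_of_real lam"] by (simp add: g_def)
  have Au: "A *v u = g + complex_of_real lam *s u"
    by (simp add: g_def)
  have uAu: "cinner u (A *v u) = complex_of_real lam"
    using hermitian_form_real[OF herm] by (simp add: lam_def)
  have ug: "cinner u g = 0" and gu: "cinner g u = 0"
    using cinner_commute[of g u] by (simp_all add: g_def cinner_diff_right cinner_scale_right u uAu)
  have uAg: "cinner u (A *v g) + cinner g (A *v u) = 2 * cinner g g"
    using hermitian_cinner_swap[OF herm, of u g]
    by (simp add: Au cinner_add_left cinner_add_right cinner_scale_left cinner_scale_right ug gu)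
  have "Re (cinner g g) = 0"
  proof (rule linear_coeff_zero_if_nonneg)
    fix s :: real
    define y where "y = u + complex_of_real (-s) *s g"
    have "y \<in> W"
      unfolding y_def by (rule W(1)[OF u(1) \<open>g \<in> W\<close>])
    from max[OF this] have "Re (cinner y (A *v y)) \<le> lam * Re (cinner y y)"
      by (simp add: cinner_self lam_def)
    moreover have "Re (cinner y (A *v y)) = lam - 2 * s * Re (cinner g g) + s^2 * Re (cinner g (A *v g))"
      unfolding y_def cinner_expand_real_shift uAu uAg by (simp add: power2_eq_square)
    moreover have "Re (cinner y y) = 1 + s^2 * Re (cinner g g)"
      using cinner_expand_real_shift[of u "-s" g "mat 1"] unfolding y_def[symmetric]
      by (simp add: u ug gu power2_eq_square)
    ultimately show "0 \<le> 2 * s * Re (cinner g g) + s^2 * (lam * Re (cinner g g) - Re (cinner g (A *v g)))"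
      by (simp add: algebra_simps)
  qed
  then have "g = 0"
    by (simp add: cinner_self)
  then show ?thesis
    by (simp add: g_def lam_def)
qed

lemma form_attains_max_on_unit_sphere:
  fixes W :: "(complex^'n::finite) set"
  assumes W: "closed W" "\<And>c x. x \<in> W \<Longrightarrow> c *s x \<in> W" and x0: "x0 \<in> W" "x0 \<noteq> 0"
  shows "\<exists>u\<in>W. norm u = 1 \<and> (\<forall>y\<in>W. Re (cinner y (A *v y)) \<le> Re (cinner u (A *v u)) * (norm y)^2)"
proof -
  define K where "K = sphere 0 1 \<inter> W"
  have unit: "complex_of_real (1 / norm y) *s y \<in> K" if "y \<in> W" "y \<noteq> 0" for y
    using that W(2) by (simp add: K_def norm_scalar_mult_complex norm_divide)
  have "compact K"
    unfolding K_def using W(1) by (rule compact_Int_closed[OF compact_sphere])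
  moreover have "continuous_on K (\<lambda>x. Re (cinner x (A *v x)))"
    unfolding cinner_def matrix_vector_mult_def by (intro continuous_intros)
  moreover have "K \<noteq> {}"
    using unit[OF x0] by blast
  ultimately obtain u where u: "u \<in> K" and max: "\<And>y. y \<in> K \<Longrightarrow> Re (cinner y (A *v y)) \<le> Re (cinner u (A *v u))"
    using continuous_attains_sup[of K "\<lambda>x. Re (cinner x (A *v x))"] by blast
  have "Re (cinner y (A *v y)) \<le> Re (cinner u (A *v u)) * (norm y)^2" if "y \<in> W" for y
  proof (cases "y = 0")
    case False
    have "cinner (complex_of_real (1 / norm y) *s y) (A *v (complex_of_real (1 / norm y) *s y))
        = complex_of_real ((1 / norm y)^2) * cinner y (A *v y)"
      by (simp add: vector_scalar_commute cinner_scale_left cinner_scale_right power2_eq_square)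
    then have "(1 / norm y)^2 * Re (cinner y (A *v y)) \<le> Re (cinner u (A *v u))"
      using max[OF unit[OF that False]] by simp
    then show ?thesis
      using False by (simp add: field_simps)
  qed simp
  then show ?thesis
    using u by (auto simp: K_def)
qed

lemma closed_orthogonal_complement: "closed {x::complex^'n::finite. \<forall>v\<in>V. cinner v x = 0}"
proof -
  have "closed {x. cinner v x = 0}" for v :: "complex^'n"
    unfolding cinner_def by (intro closed_Collect_eq continuous_intros)
  moreover have "{x. \<forall>v\<in>V. cinner v x = 0} = (\<Inter>v\<in>V. {x. cinner v x = 0})"
    by auto
  ultimately show ?thesis
    by auto
qed

lemma hermitian_orthogonal_complement_invariant:
  assumes herm: "adjointM A = A" and V: "orthonormal_eigvecs A V" and x: "\<forall>v\<in>V. cinner v x = 0"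
  shows "\<forall>v\<in>V. cinner v (A *v x) = 0"
proof
  fix v assume "v \<in> V"
  then obtain c where "A *v v = c *s v"
    using V unfolding orthonormal_eigvecs_def by blast
  then show "cinner v (A *v x) = 0"
    using x \<open>v \<in> V\<close> hermitian_cinner_swap[OF herm, of v x] by (simp add: cinner_scale_left)
qed

lemma orthonormal_eigvecs_extend:
  assumes herm: "adjointM A = A" and V: "orthonormal_eigvecs A V"
    and x0: "x0 \<noteq> 0" "\<forall>v\<in>V. cinner v x0 = 0"
  shows "\<exists>u. u \<notin> V \<and> orthonormal_eigvecs A (insert u V)"
proof -
  define W where "W = {x. \<forall>v\<in>V. cinner v x = 0}"
  have W_add_scale: "x + c *s y \<in> W" if "x \<in> W" "y \<in> W" for x y c
    using that by (simp add: W_def cinner_add_right cinner_scale_right)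
  have W_scale: "c *s x \<in> W" if "x \<in> W" for c x
    using that by (simp add: W_def cinner_scale_right)
  have W_invariant: "A *v x \<in> W" if "x \<in> W" for x
    using hermitian_orthogonal_complement_invariant[OF herm V] that by (simp add: W_def)
  obtain u where u: "u \<in> W" "norm u = 1"
    and max: "\<And>y. y \<in> W \<Longrightarrow> Re (cinner y (A *v y)) \<le> Re (cinner u (A *v u)) * (norm y)^2"
    using form_attains_max_on_unit_sphere[OF closed_orthogonal_complement[of V, folded W_def] W_scale,
        of x0 A] x0
    by (auto simp: W_def)
  have uu: "cinner u u = 1"
    using u by (simp add: cinner_self)
  have "\<exists>c. A *v u = c *s u"
    using rayleigh_max_imp_eigenvector[OF herm W_add_scale W_invariant u(1) uu max] by blast
  moreover have "u \<notin> V"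
    using u(1) uu by (force simp: W_def)
  moreover have "cinner v u = 0 \<and> cinner u v = 0" if "v \<in> V" for v
    using u(1) that cinner_commute[of u v] by (simp add: W_def)
  ultimately have "orthonormal_eigvecs A (insert u V)"
    using V uu unfolding orthonormal_eigvecs_def by simp
  with \<open>u \<notin> V\<close> show ?thesis
    by blast
qed

theorem hermitian_eigenbasis_exists:
  fixes A :: "complex^'n::finite^'n"
  assumes herm: "adjointM A = A"
  shows "\<exists>V. eigenbasis A V"
proof -
  have "\<exists>V. eigenbasis A V" if "orthonormal_eigvecs A V0" for V0
    using that
  proof (induction "DIM(complex^'n) - card V0" arbitrary: V0 rule: less_induct)
    case less
    show ?case
    proof (cases "eigenbasis A V0")
      case False
      then obtain x0 where "x0 \<noteq> 0" "\<forall>v\<in>V0. cinner v x0 = 0"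
        using False less.prems by (auto simp: eigenbasis_def)
      then obtain u where u: "u \<notin> V0" "orthonormal_eigvecs A (insert u V0)"
        using orthonormal_eigvecs_extend[OF herm less.prems] by blast
      have "card (insert u V0) = Suc (card V0)"
        using u less.prems unfolding orthonormal_eigvecs_def by simp
      moreover have "card (insert u V0) \<le> DIM(complex^'n)"
        by (rule orthonormal_eigvecs_card_le[OF u(2)])
      ultimately have "DIM(complex^'n) - card (insert u V0) < DIM(complex^'n) - card V0"
        by linarith
      then show ?thesis
        by (rule less.hyps[OF _ u(2)])
    qed blast
  qed
  from this[of "{}"] show ?thesis
    by (simp add: orthonormal_eigvecs_def)
qed

definition spectral_matrix :: "(complex^'n::finite) set \<Rightarrow> (complex^'n \<Rightarrow> real) \<Rightarrow> complex^'n^'n" where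
  "spectral_matrix V f = (\<chi> i j. \<Sum>v\<in>V. complex_of_real (f v) * v $ i * cnj (v $ j))"

lemma spectral_matrix_mult_vec:
  "spectral_matrix V f *v x = (\<Sum>v\<in>V. (complex_of_real (f v) * cinner v x) *s v)"
proof -
  have "(spectral_matrix V f *v x) $ i = (\<Sum>v\<in>V. \<Sum>j\<in>UNIV. complex_of_real (f v) * v $ i * cnj (v $ j) * x $ j)" for i
    by (simp add: spectral_matrix_def matrix_vector_mult_def sum_distrib_right) (rule sum.swap)
  then show ?thesis
    by (simp add: vec_eq_iff cinner_def sum_distrib_left algebra_simps)
qed

lemma spectral_matrix_hermitian: "adjointM (spectral_matrix V f) = spectral_matrix V f"
  by (simp add: adjointM_def spectral_matrix_def vec_eq_iff mult.commute mult.left_commute)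

lemma spectral_matrix_eigvec:
  assumes V: "orthonormal_eigvecs A V" and "w \<in> V"
  shows "spectral_matrix V f *v w = complex_of_real (f w) *s w"
proof -
  have "(complex_of_real (f v) * cinner v w) *s v = (if v = w then complex_of_real (f w) *s w else 0)"
    if "v \<in> V" for v
    using V \<open>w \<in> V\<close> that by (auto simp: orthonormal_eigvecs_def)
  then show ?thesis
    using V \<open>w \<in> V\<close> by (simp add: spectral_matrix_mult_vec orthonormal_eigvecs_def)
qed

lemma spectral_matrix_mult:
  assumes "orthonormal_eigvecs A V"
  shows "spectral_matrix V f ** spectral_matrix V g = spectral_matrix V (\<lambda>v. f v * g v)"
proof -
  have "(spectral_matrix V f ** spectral_matrix V g) *v x = spectral_matrix V (\<lambda>v. f v * g v) *v x" for x
    using spectral_matrix_eigvec[OF assms]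
    by (simp add: spectral_matrix_mult_vec vec.sum vector_scalar_commute mult.commute mult.left_commute
        flip: matrix_vector_mul_assoc)
  then show ?thesis
    by (simp add: matrix_eq)
qed

lemma spectral_matrix_psd:
  fixes V :: "(complex^'n::finite) set"
  assumes "\<And>v. v \<in> V \<Longrightarrow> 0 \<le> f v"
  shows "psd (spectral_matrix V f)"
proof (rule psdI[OF spectral_matrix_hermitian])
  fix x :: "complex^'n"
  have "cinner v x * cinner x v = complex_of_real ((cmod (cinner v x))^2)" for v
    using complex_norm_square[of "cinner v x"] cinner_commute[of x v] by simp
  then have "cinner x (spectral_matrix V f *v x) = (\<Sum>v\<in>V. complex_of_real (f v * (cmod (cinner v x))^2))"
    unfolding spectral_matrix_mult_vec cinner_sum_right cinner_scale_right
    by (intro sum.cong refl) (simp add: mult.assoc)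
  then show "0 \<le> Re (cinner x (spectral_matrix V f *v x))"
    using assms by (simp add: sum_nonneg)
qed

lemma trace_spectral_matrix:
  assumes "orthonormal_eigvecs A V"
  shows "trace (spectral_matrix V f) = complex_of_real (\<Sum>v\<in>V. f v)"
proof -
  have "trace (spectral_matrix V f) = (\<Sum>v\<in>V. complex_of_real (f v) * cinner v v)"
    unfolding trace_def spectral_matrix_def cinner_def
    by (simp add: sum_distrib_left mult.assoc mult.commute mult.left_commute) (rule sum.swap)
  then show ?thesis
    using assms by (simp add: orthonormal_eigvecs_def)
qed

lemma eigenbasis_expansion:
  assumes V: "eigenbasis A V"
  shows "x = (\<Sum>v\<in>V. cinner v x *s v)"
proof -
  have "cinner w (\<Sum>v\<in>V. cinner v x *s v) = cinner w x" if "w \<in> V" for w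
  proof -
    have "cinner v x * cinner w v = (if v = w then cinner w x else 0)" if "v \<in> V" for v
      using V \<open>w \<in> V\<close> that unfolding eigenbasis_def orthonormal_eigvecs_def by auto
    then have "(\<Sum>v\<in>V. cinner v x * cinner w v) = (\<Sum>v\<in>V. if v = w then cinner w x else 0)"
      by (rule sum.cong[OF refl])
    then show ?thesis
      using V \<open>w \<in> V\<close> by (simp add: cinner_sum_right cinner_scale_right eigenbasis_def
          orthonormal_eigvecs_def)
  qed
  then have "\<forall>w\<in>V. cinner w (x - (\<Sum>v\<in>V. cinner v x *s v)) = 0"
    by (simp add: cinner_diff_right)
  then have "x - (\<Sum>v\<in>V. cinner v x *s v) = 0"
    using V unfolding eigenbasis_def by blast
  then show ?thesis
    by simp
qed

lemma trace_eq_sum_eigenbasis: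
  assumes "eigenbasis A V"
  shows "trace Y = (\<Sum>v\<in>V. cinner v (Y *v v))"
proof -
  have "(Y *v axis k 1) $ k = (\<Sum>v\<in>V. cnj (v $ k) * (Y *v v) $ k)" for k
  proof -
    have "Y *v axis k 1 = (\<Sum>v\<in>V. cnj (v $ k) *s (Y *v v))"
      by (subst eigenbasis_expansion[OF assms, of "axis k 1"])
        (simp add: vec.sum vector_scalar_commute cinner_axis_right)
    then show ?thesis
      by simp
  qed
  then have "trace Y = (\<Sum>k\<in>UNIV. \<Sum>v\<in>V. cnj (v $ k) * (Y *v v) $ k)"
    by (simp add: trace_def matrix_vector_mult_axis)
  also have "\<dots> = (\<Sum>v\<in>V. cinner v (Y *v v))"
    unfolding cinner_def by (rule sum.swap)
  finally show ?thesis .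
qed

lemma hermitian_eq_spectral_matrix:
  assumes herm: "adjointM A = A" and V: "eigenbasis A V"
  shows "A = spectral_matrix V (\<lambda>v. Re (cinner v (A *v v)))"
proof -
  have ON: "orthonormal_eigvecs A V"
    using V by (simp add: eigenbasis_def)
  have "A *v x = spectral_matrix V (\<lambda>v. Re (cinner v (A *v v))) *v x" for x
  proof -
    have "A *v x = A *v (\<Sum>v\<in>V. cinner v x *s v)"
      by (subst eigenbasis_expansion[OF V, of x]) (rule refl)
    also have "\<dots> = (\<Sum>v\<in>V. cinner v x *s (A *v v))"
      by (simp add: vec.sum vector_scalar_commute)
    also have "\<dots> = (\<Sum>v\<in>V. (complex_of_real (Re (cinner v (A *v v))) * cinner v x) *s v)"
    proof (rule sum.cong[OF refl])
      fix v assume "v \<in> V"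
      have "cinner v x *s (A *v v) = cinner v x *s (cinner v (A *v v) *s v)"
        using orthonormal_eigvecs_eigenvalue[OF ON \<open>v \<in> V\<close>] by (rule arg_cong)
      then show "cinner v x *s (A *v v) = (complex_of_real (Re (cinner v (A *v v))) * cinner v x) *s v"
        by (simp only: hermitian_form_real[OF herm] vector_smult_assoc mult.commute)
    qed
    finally show ?thesis
      by (simp add: spectral_matrix_mult_vec)
  qed
  then show ?thesis
    unfolding matrix_eq by blast
qed

lemma psd_sqrt_eq_spectral_matrix:
  assumes M: "psd M" and V: "eigenbasis M V"
  shows "psd_sqrt M = spectral_matrix V (\<lambda>v. sqrt (Re (cinner v (M *v v))))"
proof (rule psd_sqrt_eqI)
  have nonneg: "0 \<le> Re (cinner v (M *v v))" for v
    using psd_form_nonneg[OF M] .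
  then show "psd (spectral_matrix V (\<lambda>v. sqrt (Re (cinner v (M *v v)))))"
    by (intro spectral_matrix_psd) simp
  have "spectral_matrix V (\<lambda>v. sqrt (Re (cinner v (M *v v))))
      ** spectral_matrix V (\<lambda>v. sqrt (Re (cinner v (M *v v))))
      = spectral_matrix V (\<lambda>v. Re (cinner v (M *v v)))"
    using V nonneg by (simp add: spectral_matrix_mult[of M] eigenbasis_def)
  also have "\<dots> = M"
    by (rule hermitian_eq_spectral_matrix[OF psd_hermitian[OF M] V, symmetric])
  finally show "spectral_matrix V (\<lambda>v. sqrt (Re (cinner v (M *v v))))
      ** spectral_matrix V (\<lambda>v. sqrt (Re (cinner v (M *v v)))) = M" .
qed

lemma psd_gram: "psd (adjointM Y ** Y)"
proof (rule psdI)
  show "adjointM (adjointM Y ** Y) = adjointM Y ** Y"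
    by (simp add: adjointM_mult)
  have "cinner v ((adjointM Y ** Y) *v v) = cinner (Y *v v) (Y *v v)" for v
    using cinner_adjointM[of v "adjointM Y" "Y *v v"] by (simp flip: matrix_vector_mul_assoc)
  then show "0 \<le> Re (cinner v ((adjointM Y ** Y) *v v))" for v
    by (simp add: cinner_self)
qed

text \<open>In an eigenbasis of \<open>Y\<^sup>* Y\<close>, each diagonal entry \<open>\<langle>v, Y v\<rangle>\<close> is bounded
  by \<open>\<parallel>Y v\<parallel> = \<langle>v, Y\<^sup>* Y v\<rangle>\<^sup>1\<^sup>/\<^sup>2\<close> (Cauchy-Schwarz).\<close>
lemma Re_trace_le_trace_psd_sqrt_gram: "Re (trace Y) \<le> Re (trace (psd_sqrt (adjointM Y ** Y)))"
proof -
  define M where "M = adjointM Y ** Y"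
  have M: "psd M"
    unfolding M_def by (rule psd_gram)
  obtain V where V: "eigenbasis M V"
    using hermitian_eigenbasis_exists[OF psd_hermitian[OF M]] by blast
  have "Re (cinner v (Y *v v)) \<le> sqrt (Re (cinner v (M *v v)))" if "v \<in> V" for v
  proof -
    have "cinner v v = 1"
      using V that by (simp add: eigenbasis_def orthonormal_eigvecs_def)
    then have "(norm v)^2 = 1"
      by (metis cinner_self of_real_eq_1_iff)
    then have "norm v = 1"
      using norm_ge_zero[of v] by (auto simp: power2_eq_1_iff)
    moreover have "cinner v (M *v v) = complex_of_real ((norm (Y *v v))^2)"
      using cinner_adjointM[of v "adjointM Y" "Y *v v"]
      by (simp add: M_def cinner_self flip: matrix_vector_mul_assoc)
    ultimately show ?thesis
      using complex_Re_le_cmod[of "cinner v (Y *v v)"] cmod_cinner_le[of v "Y *v v"] by simp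
  qed
  then have "Re (trace Y) \<le> (\<Sum>v\<in>V. sqrt (Re (cinner v (M *v v))))"
    unfolding trace_eq_sum_eigenbasis[OF V] Re_sum by (rule sum_mono)
  also have "\<dots> = Re (trace (psd_sqrt M))"
    using V by (simp add: psd_sqrt_eq_spectral_matrix[OF M V] trace_spectral_matrix[of M] eigenbasis_def)
  finally show ?thesis
    by (simp add: M_def)
qed

section \<open>Fidelity of a diagonal state\<close>

lemma diagM_mult_left: "(diagM f ** A) $ i $ j = f i * A $ i $ j"
  by (simp add: matrix_matrix_mult_def diagM_def if_distrib if_distribR cong: if_cong)

lemma diagM_mult_right: "(A ** diagM f) $ i $ j = A $ i $ j * f j"
  by (simp add: matrix_matrix_mult_def diagM_def if_distrib if_distribR cong: if_cong)

lemma diagM_mult: "diagM f ** diagM g = diagM (\<lambda>k. f k * g k)"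
  by (simp add: vec_eq_iff diagM_mult_left) (simp add: diagM_def)

lemma adjointM_diagM: "adjointM (diagM f) = diagM (\<lambda>k. cnj (f k))"
  by (simp add: adjointM_def diagM_def vec_eq_iff)

lemma psd_diagM:
  fixes c :: "'n::finite \<Rightarrow> real"
  assumes "\<And>k. 0 \<le> c k"
  shows "psd (diagM (\<lambda>k. complex_of_real (c k)))"
proof (rule psdI)
  show "adjointM (diagM (\<lambda>k. complex_of_real (c k))) = diagM (\<lambda>k. complex_of_real (c k))"
    by (simp add: adjointM_diagM)
  have "cnj (v $ i) * (diagM (\<lambda>k. complex_of_real (c k)) *v v) $ i = complex_of_real (c i * (cmod (v $ i))^2)"
    for v :: "complex^'n" and i
    using complex_norm_square[of "v $ i"]
    by (simp add: matrix_vector_mult_def diagM_def if_distrib if_distribR mult.commute mult.left_commute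
        cong: if_cong)
  then have "cinner v (diagM (\<lambda>k. complex_of_real (c k)) *v v) = (\<Sum>i\<in>UNIV. complex_of_real (c i * (cmod (v $ i))^2))"
    for v :: "complex^'n"
    unfolding cinner_def by (intro sum.cong refl)
  then show "0 \<le> Re (cinner v (diagM (\<lambda>k. complex_of_real (c k)) *v v))" for v :: "complex^'n"
    using assms by (simp add: sum_nonneg)
qed

lemma psd_sqrt_diagM:
  assumes "\<And>k. 0 \<le> c k"
  shows "psd_sqrt (diagM (\<lambda>k. complex_of_real (c k))) = diagM (\<lambda>k. complex_of_real (sqrt (c k)))"
  using assms by (intro psd_sqrt_eqI psd_diagM) (simp_all add: diagM_mult flip: of_real_mult)

lemma psd_sqrt_psd:
  assumes "psd M"
  shows "psd (psd_sqrt M)"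
proof -
  obtain V where "eigenbasis M V"
    using hermitian_eigenbasis_exists[OF psd_hermitian[OF assms]] by blast
  then show ?thesis
    using psd_form_nonneg[OF assms]
    by (simp add: psd_sqrt_eq_spectral_matrix[OF assms] spectral_matrix_psd)
qed

lemma psd_sqrt_rank_one:
  "psd_sqrt (\<chi> k l. phi $ k * cnj (phi $ l)) = (\<chi> k l. complex_of_real (1 / norm phi) * (phi $ k * cnj (phi $ l)))"
proof (rule psd_sqrt_eqI)
  define S where "S = (\<chi> k l. complex_of_real (1 / norm phi) * (phi $ k * cnj (phi $ l)))"
  have S: "S *v x = (complex_of_real (1 / norm phi) * cinner phi x) *s phi" for x
    by (simp add: vec_eq_iff S_def matrix_vector_mult_def cinner_def sum_distrib_left algebra_simps)
  show "psd S"
  proof (rule psdI)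
    show "adjointM S = S"
      by (simp add: adjointM_def S_def vec_eq_iff mult.commute)
    have "cinner phi v * cinner v phi = complex_of_real ((cmod (cinner phi v))^2)" for v
      using complex_norm_square[of "cinner phi v"] cinner_commute[of v phi] by simp
    then show "0 \<le> Re (cinner v (S *v v))" for v
      by (simp add: S cinner_scale_right mult.assoc)
  qed
  have "(S ** S) *v x = (\<chi> k l. phi $ k * cnj (phi $ l)) *v x" for x
  proof -
    have "(S ** S) *v x = (complex_of_real (1 / norm phi) * complex_of_real (1 / norm phi)
        * cinner phi phi * cinner phi x) *s phi"
      by (simp add: S cinner_scale_right mult_ac flip: matrix_vector_mul_assoc)
    also have "\<dots> = cinner phi x *s phi"
      by (cases "phi = 0") (simp_all add: cinner_self power2_eq_square flip: of_real_mult)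
    also have "\<dots> = (\<chi> k l. phi $ k * cnj (phi $ l)) *v x"
      by (simp add: vec_eq_iff matrix_vector_mult_def cinner_def sum_distrib_left algebra_simps)
    finally show ?thesis .
  qed
  then show "S ** S = (\<chi> k l. phi $ k * cnj (phi $ l))"
    by (simp add: matrix_eq)
qed

lemma fidelity_diag_pure:
  fixes a :: "'n::finite \<Rightarrow> complex"
  assumes p: "\<And>k. 0 \<le> p k"
  shows "fidelity (diagM (\<lambda>k. complex_of_real (p k))) (\<chi> k l. a k * cnj (a l))
    = (\<Sum>k\<in>UNIV. p k * (cmod (a k))^2)"
proof -
  define phi :: "complex^'n" where "phi = (\<chi> k. complex_of_real (sqrt (p k)) * a k)"
  have sandwich: "diagM (\<lambda>k. complex_of_real (sqrt (p k))) ** (\<chi> k l. a k * cnj (a l))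
      ** diagM (\<lambda>k. complex_of_real (sqrt (p k))) = (\<chi> k l. phi $ k * cnj (phi $ l))"
    by (simp add: vec_eq_iff diagM_mult_left diagM_mult_right phi_def mult_ac)
  have "trace (\<chi> k l. complex_of_real (1 / norm phi) * (phi $ k * cnj (phi $ l)))
      = complex_of_real (1 / norm phi) * cinner phi phi"
    by (simp add: trace_def cinner_def sum_distrib_left mult.commute)
  also have "\<dots> = complex_of_real (norm phi)"
    by (simp add: cinner_self power2_eq_square)
  finally have "fidelity (diagM (\<lambda>k. complex_of_real (p k))) (\<chi> k l. a k * cnj (a l)) = (norm phi)^2"
    by (simp add: fidelity_def psd_sqrt_diagM[OF p] sandwich psd_sqrt_rank_one)
  also have "\<dots> = (\<Sum>k\<in>UNIV. p k * (cmod (a k))^2)"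
    using p by (simp add: power2_norm_vec_complex phi_def norm_mult power_mult_distrib)
  finally show ?thesis .
qed

text \<open>With \<open>Y = B\<^sup>* \<surd>\<rho>\<close> one has \<open>Y\<^sup>* Y = \<surd>\<rho> B B\<^sup>* \<surd>\<rho>\<close>, so this is \<open>Re tr Y \<le> tr |Y|\<close>.\<close>
lemma fidelity_ge_Re_trace:
  assumes rho: "psd rho" and nonneg: "0 \<le> Re (trace (adjointM B ** psd_sqrt rho))"
  shows "(Re (trace (adjointM B ** psd_sqrt rho)))^2 \<le> fidelity rho (B ** adjointM B)"
proof -
  define Y where "Y = adjointM B ** psd_sqrt rho"
  have "adjointM Y ** Y = psd_sqrt rho ** (B ** adjointM B) ** psd_sqrt rho"
    using psd_hermitian[OF psd_sqrt_psd[OF rho]]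
    by (simp add: Y_def adjointM_mult matrix_mul_assoc)
  then have "Re (trace Y) \<le> Re (trace (psd_sqrt (psd_sqrt rho ** (B ** adjointM B) ** psd_sqrt rho)))"
    using Re_trace_le_trace_psd_sqrt_gram[of Y] by simp
  then show ?thesis
    using nonneg unfolding fidelity_def Y_def by (simp add: power_mono)
qed

lemma fidelity_diag_conj_ge:
  fixes U :: "complex^'n::finite^'n"
  assumes c: "\<And>k. 0 \<le> c k" and q: "\<And>k. 0 \<le> q k" "(\<Sum>k\<in>UNIV. q k) = 1"
    and m: "0 \<le> m" "\<And>k. m * q k \<le> sqrt (q k) * sqrt (c k) * Re (U $ k $ k)"
  shows "m^2 \<le> fidelity (diagM (\<lambda>k. complex_of_real (c k)))
                 (U ** diagM (\<lambda>k. complex_of_real (q k)) ** adjointM U)"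
proof -
  define B where "B = U ** diagM (\<lambda>k. complex_of_real (sqrt (q k)))"
  have "diagM (\<lambda>k. complex_of_real (sqrt (q k))) ** diagM (\<lambda>k. complex_of_real (sqrt (q k)))
      = diagM (\<lambda>k. complex_of_real (q k))"
    using q(1) by (simp add: diagM_mult flip: of_real_mult)
  then have BB: "B ** adjointM B = U ** diagM (\<lambda>k. complex_of_real (q k)) ** adjointM U"
    by (simp add: B_def adjointM_mult adjointM_diagM) (metis matrix_mul_assoc)
  have "Re (trace (adjointM B ** psd_sqrt (diagM (\<lambda>k. complex_of_real (c k)))))
      = (\<Sum>k\<in>UNIV. sqrt (q k) * sqrt (c k) * Re (U $ k $ k))"
    by (simp add: psd_sqrt_diagM[OF c] B_def adjointM_mult adjointM_diagM trace_def
        diagM_mult_left diagM_mult_right adjointM_def mult_ac)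
  also have "m \<le> \<dots>"
    using sum_mono[of UNIV "\<lambda>k. m * q k", OF m(2)] q(2) by (simp flip: sum_distrib_left)
  finally have m_le: "m \<le> Re (trace (adjointM B ** psd_sqrt (diagM (\<lambda>k. complex_of_real (c k)))))" .
  then have "m^2 \<le> (Re (trace (adjointM B ** psd_sqrt (diagM (\<lambda>k. complex_of_real (c k))))))^2"
    using m(1) by (rule power_mono)
  also have "\<dots> \<le> fidelity (diagM (\<lambda>k. complex_of_real (c k))) (B ** adjointM B)"
    using m_le m(1) by (intro fidelity_ge_Re_trace psd_diagM c) linarith
  finally show ?thesis
    by (simp add: BB)
qed

section \<open>The entrywise matrix exponential\<close>

lemma sums_exp_real: "(\<lambda>m. x^m / fact m) sums exp (x::real)"
  using exp_converges[of x] by (simp add: divide_inverse mult.commute)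

lemma mpow_entry_norm_le:
  fixes A :: "'a::{real_normed_field,banach}^'n::finite^'n"
  assumes a: "\<And>i j. norm (A $ i $ j) \<le> a"
  shows "norm (mpow A m $ i $ j) \<le> (real CARD('n) * a)^m"
proof (induction m arbitrary: i j)
  case 0
  have "0 \<le> a"
    using a norm_ge_zero order_trans by blast
  then show ?case
    by (simp add: mat_def)
next
  case (Suc m)
  have "norm (mpow A (Suc m) $ i $ j) \<le> (\<Sum>k\<in>UNIV. norm (A $ i $ k) * norm (mpow A m $ k $ j))"
    unfolding mpow.simps matrix_matrix_mult_def vec_lambda_beta norm_mult[symmetric] by (rule norm_sum)
  also have "\<dots> \<le> (\<Sum>k\<in>(UNIV::'n set). a * (real CARD('n) * a)^m)"
    using a Suc.IH by (intro sum_mono mult_mono) (auto intro: order_trans[OF norm_ge_zero])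
  also have "\<dots> = (real CARD('n) * a)^(Suc m)"
    by (simp add: algebra_simps)
  finally show ?case .
qed

lemma summable_norm_mexp_entry:
  fixes A :: "'a::{real_normed_field,banach}^'n::finite^'n"
  assumes "\<And>i j. norm (A $ i $ j) \<le> a"
  shows "summable (\<lambda>m. norm (mpow A m $ i $ j / fact m))"
  using mpow_entry_norm_le[OF assms]
  by (intro summable_comparison_test[OF _ sums_summable[OF sums_exp_real[of "real CARD('n) * a"]]])
    (auto simp: norm_divide intro!: divide_right_mono)

text \<open>Read off from the tail \<open>\<Sum>m\<ge>2. A\<^sup>m/m!\<close> of the series, using \<open>|(A\<^sup>m)\<^sub>i\<^sub>j| \<le> (N a)\<^sup>m\<close>.\<close>
lemma mexp_entry_second_order:
  fixes A :: "'a::{real_normed_field,banach}^'n::finite^'n"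
  assumes a: "\<And>i j. norm (A $ i $ j) \<le> a"
  shows "norm (mexp A $ i $ j - mat 1 $ i $ j - A $ i $ j)
    \<le> (real CARD('n) * a)^2 * exp (real CARD('n) * a)"
proof -
  define x where "x = real CARD('n) * a"
  have "0 \<le> x"
    using order_trans[OF norm_ge_zero a[of i j]] by (simp add: x_def)
  define f where "f = (\<lambda>m. mpow A m $ i $ j / fact m)"
  have sf: "summable (\<lambda>m. norm (f m))"
    unfolding f_def by (rule summable_norm_mexp_entry[OF a])
  have "mexp A $ i $ j = suminf f"
    by (simp add: mexp_def f_def)
  also have "\<dots> = (\<Sum>m. f (m + 2)) + sum f {..<2}"
    by (rule suminf_split_initial_segment[OF summable_norm_cancel[OF sf]])
  also have "sum f {..<2} = mat 1 $ i $ j + A $ i $ j"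
    by (simp add: f_def numeral_2_eq_2)
  finally have tail: "mexp A $ i $ j - mat 1 $ i $ j - A $ i $ j = (\<Sum>m. f (m + 2))"
    by simp
  have "norm (f (m + 2)) \<le> x^2 * (x^m / fact m)" for m
  proof -
    have "norm (f (m + 2)) \<le> x^(m + 2) / fact (m + 2)"
      unfolding f_def norm_divide norm_fact x_def by (intro divide_right_mono mpow_entry_norm_le[OF a]) simp
    also have "\<dots> \<le> x^(m + 2) / fact m"
      using \<open>0 \<le> x\<close> by (intro divide_left_mono fact_mono) auto
    finally show ?thesis
      by (simp add: power_add power2_eq_square algebra_simps)
  qed
  then have "norm (\<Sum>m. f (m + 2)) \<le> (\<Sum>m. x^2 * (x^m / fact m))"
    using summable_ignore_initial_segment[OF sf, of 2]
    by (intro summable_norm[THEN order_trans] suminf_le summable_mult sums_summable[OF sums_exp_real]) auto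
  also have "\<dots> = x^2 * exp x"
    by (rule sums_unique[symmetric]) (intro sums_mult sums_exp_real)
  finally show ?thesis
    unfolding tail x_def .
qed

lemma matrix_add_rdistrib: "((A::'a::semiring_1^'n::finite^'m) + B) ** C = A ** C + B ** C"
  by (simp add: matrix_matrix_mult_def vec_eq_iff distrib_right sum.distrib)

lemma matrix_mult_zero_right [simp]: "(A::'a::semiring_1^'n::finite^'m) ** 0 = 0"
  by (simp add: matrix_matrix_mult_def vec_eq_iff)

lemma matrix_mult_sum_right: "(A::'a::semiring_1^'n::finite^'m) ** (\<Sum>k\<in>S. f k) = (\<Sum>k\<in>S. A ** f k)"
  by (induction S rule: infinite_finite_induct) (simp_all add: matrix_add_ldistrib)

lemma binomial_sum_Suc:
  fixes g :: "nat \<Rightarrow> 'v::real_vector"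
  shows "(\<Sum>k\<le>N. (real (N choose k) * c^(N - k)) *\<^sub>R g (Suc k))
      + c *\<^sub>R (\<Sum>k\<le>N. (real (N choose k) * c^(N - k)) *\<^sub>R g k)
    = (\<Sum>k\<le>Suc N. (real (Suc N choose k) * c^(Suc N - k)) *\<^sub>R g k)"
proof -
  have "c *\<^sub>R (\<Sum>k\<le>N. (real (N choose k) * c^(N - k)) *\<^sub>R g k)
      = (\<Sum>k\<le>N. (real (N choose k) * c^(Suc N - k)) *\<^sub>R g k)"
    unfolding scaleR_sum_right by (intro sum.cong refl) (simp add: Suc_diff_le)
  also have "\<dots> = (\<Sum>k\<le>Suc N. (real (N choose k) * c^(Suc N - k)) *\<^sub>R g k)"
    by simp
  also have "\<dots> = c^(Suc N) *\<^sub>R g 0 + (\<Sum>k\<le>N. (real (N choose Suc k) * c^(N - k)) *\<^sub>R g (Suc k))"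
    by (subst sum.atMost_Suc_shift) simp
  finally have shifted: "c *\<^sub>R (\<Sum>k\<le>N. (real (N choose k) * c^(N - k)) *\<^sub>R g k)
      = c^(Suc N) *\<^sub>R g 0 + (\<Sum>k\<le>N. (real (N choose Suc k) * c^(N - k)) *\<^sub>R g (Suc k))" .
  have "(\<Sum>k\<le>Suc N. (real (Suc N choose k) * c^(Suc N - k)) *\<^sub>R g k)
      = c^(Suc N) *\<^sub>R g 0 + (\<Sum>k\<le>N. (real (Suc N choose Suc k) * c^(N - k)) *\<^sub>R g (Suc k))"
    by (subst sum.atMost_Suc_shift) simp
  also have "\<dots> = c^(Suc N) *\<^sub>R g 0 + ((\<Sum>k\<le>N. (real (N choose k) * c^(N - k)) *\<^sub>R g (Suc k))
      + (\<Sum>k\<le>N. (real (N choose Suc k) * c^(N - k)) *\<^sub>R g (Suc k)))"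
    by (simp add: distrib_right scaleR_add_left sum.distrib)
  finally show ?thesis
    unfolding shifted by (simp add: algebra_simps)
qed

lemma mpow_add_scalar:
  fixes B :: "real^'n::finite^'n"
  shows "mpow (B + c *\<^sub>R mat 1) N = (\<Sum>k\<le>N. (real (N choose k) * c^(N - k)) *\<^sub>R mpow B k)"
proof (induction N)
  case (Suc N)
  have "mpow (B + c *\<^sub>R mat 1) (Suc N)
      = (B + c *\<^sub>R mat 1) ** (\<Sum>k\<le>N. (real (N choose k) * c^(N - k)) *\<^sub>R mpow B k)"
    using Suc.IH by simp
  also have "\<dots> = (\<Sum>k\<le>N. (real (N choose k) * c^(N - k)) *\<^sub>R mpow B (Suc k))
      + c *\<^sub>R (\<Sum>k\<le>N. (real (N choose k) * c^(N - k)) *\<^sub>R mpow B k)"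
    by (simp add: matrix_add_rdistrib matrix_mult_sum_right matrix_scalar_ac scaleR_add_right
        sum.distrib scaleR_sum_right mult.commute flip: scalar_matrix_assoc)
  finally show ?case
    by (simp only: binomial_sum_Suc)
qed simp

lemma matrix_entry_norm_bounded: "\<exists>a. \<forall>i j. norm ((A::'a::real_normed_vector^'n::finite^'m) $ i $ j) \<le> a"
proof -
  have "norm (A $ i $ j) \<le> (\<Sum>i\<in>UNIV. \<Sum>j\<in>UNIV. norm (A $ i $ j))" for i j
  proof -
    have "norm (A $ i $ j) \<le> (\<Sum>j\<in>UNIV. norm (A $ i $ j))"
      by (rule member_le_sum) auto
    also have "\<dots> \<le> (\<Sum>i\<in>UNIV. \<Sum>j\<in>UNIV. norm (A $ i $ j))"
      by (rule member_le_sum[where f="\<lambda>i. \<Sum>j\<in>UNIV. norm (A $ i $ j)"]) (auto intro: sum_nonneg)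
    finally show ?thesis .
  qed
  then show ?thesis
    by blast
qed

text \<open>A Cauchy product of the exponential series of \<open>c\<close> with that of \<open>B\<close>, combined with the
  binomial expansion \<open>mpow_add_scalar\<close>.\<close>
lemma mexp_add_scalar:
  fixes B :: "real^'n::finite^'n"
  shows "mexp (B + c *\<^sub>R mat 1) $ i $ j = exp c * mexp B $ i $ j"
proof -
  obtain a where a: "\<And>i j. norm (B $ i $ j) \<le> a"
    using matrix_entry_norm_bounded by blast
  define f where "f = (\<lambda>k. mpow B k $ i $ j / fact k)"
  define g where "g = (\<lambda>m. c^m / fact m :: real)"
  have g: "summable (\<lambda>k. norm (g k))"
    using sums_summable[OF sums_exp_real[of "\<bar>c\<bar>"]] by (simp add: g_def power_abs)
  have f: "summable (\<lambda>k. norm (f k))"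
    unfolding f_def by (rule summable_norm_mexp_entry[OF a])
  have "exp c * mexp B $ i $ j = (\<Sum>k. g k) * (\<Sum>k. f k)"
    using sums_exp_real[of c] by (simp add: g_def f_def mexp_def sums_iff)
  also have "\<dots> = (\<Sum>k. \<Sum>l\<le>k. g l * f (k - l))"
    by (rule Cauchy_product[OF g f])
  also have "\<dots> = (\<Sum>k. mpow (B + c *\<^sub>R mat 1) k $ i $ j / fact k)"
  proof (rule suminf_cong)
    fix k
    have "(\<Sum>l\<le>k. g l * f (k - l)) = (\<Sum>l\<le>k. g (k - l) * f l)"
      by (rule sum.reindex_bij_witness[where i="\<lambda>l. k - l" and j="\<lambda>l. k - l"]) auto
    also have "\<dots> = (\<Sum>l\<le>k. real (k choose l) * c^(k - l) * mpow B l $ i $ j / fact k)"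
      by (intro sum.cong refl) (simp add: f_def g_def binomial_fact)
    also have "\<dots> = mpow (B + c *\<^sub>R mat 1) k $ i $ j / fact k"
      by (simp add: mpow_add_scalar sum_divide_distrib)
    finally show "(\<Sum>l\<le>k. g l * f (k - l)) = mpow (B + c *\<^sub>R mat 1) k $ i $ j / fact k" .
  qed
  finally show ?thesis
    by (simp add: mexp_def)
qed

lemma mpow_nonneg:
  fixes C :: "real^'n::finite^'n"
  assumes "\<And>i j. 0 \<le> C $ i $ j"
  shows "0 \<le> mpow C m $ i $ j"
  by (induction m arbitrary: i j) (auto simp: mat_def matrix_matrix_mult_def assms intro!: sum_nonneg)

lemma mexp_nonneg:
  fixes C :: "real^'n::finite^'n"
  assumes "\<And>i j. 0 \<le> C $ i $ j"
  shows "0 \<le> mexp C $ i $ j"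
proof -
  obtain a where "\<And>i j. norm (C $ i $ j) \<le> a"
    using matrix_entry_norm_bounded by blast
  then have "summable (\<lambda>m. mpow C m $ i $ j / fact m)"
    using summable_norm_cancel[OF summable_norm_mexp_entry] by blast
  then show ?thesis
    unfolding mexp_def using mpow_nonneg[OF assms] by (simp add: suminf_nonneg)
qed

text \<open>A Metzler matrix becomes entrywise nonnegative after adding a large multiple of the identity.\<close>
lemma mexp_nonneg_if_offdiag_nonneg:
  fixes B :: "real^'n::finite^'n"
  assumes "\<And>i j. i \<noteq> j \<Longrightarrow> 0 \<le> B $ i $ j"
  shows "0 \<le> mexp B $ i $ j"
proof -
  define c where "c = (\<Sum>k\<in>UNIV. \<bar>B $ k $ k\<bar>)"
  have c: "\<bar>B $ k $ k\<bar> \<le> c" for k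
    unfolding c_def by (rule member_le_sum) auto
  have "0 \<le> B $ k $ k + c" for k
    using abs_ge_minus_self[of "B $ k $ k"] c[of k] by linarith
  then have "0 \<le> (B + c *\<^sub>R mat 1) $ i' $ j'" for i' j'
    using assms[of i' j'] by (auto simp: mat_def)
  then have "0 \<le> mexp (B + c *\<^sub>R mat 1) $ i $ j"
    by (rule mexp_nonneg)
  then show ?thesis
    by (simp add: mexp_add_scalar zero_le_mult_iff)
qed

lemma small_time_bounds:
  fixes K t :: real
  assumes "0 \<le> t" "1 \<le> K" "K * t \<le> 1/2"
  shows "t \<le> 1/2" "K * t^2 \<le> t / 2"
proof -
  show "t \<le> 1/2"
    using mult_right_mono[OF assms(2,1)] assms(3) by simp
  show "K * t^2 \<le> t / 2"
    using mult_right_mono[OF assms(3,1)] by (simp add: power2_eq_square mult.assoc)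
qed

text \<open>In the next three lemmas \<open>p\<close> and \<open>a\<close> stand for \<open>p\<^sub>k\<^sub>j(t)\<close> and \<open>\<alpha>\<^sub>k\<^sub>j(t)\<close>, known up to
  \<open>K t\<^sup>2\<close>; off the diagonal \<open>l \<in> {0, 1}\<close> is the adjacency indicator.\<close>
lemma diagonal_term_lower:
  fixes p t d K :: real and a :: complex
  assumes t: "0 \<le> t" "K * t \<le> 1/2" and K: "1 \<le> K" and d: "0 \<le> d" and p: "0 \<le> p"
    and hp: "\<bar>p - (1 - d * t)\<bar> \<le> K * t^2"
    and ha: "cmod (a - (1 - \<i> * complex_of_real (d * t))) \<le> K * t^2"
  shows "0 \<le> Re a" "1 - d * t - 5 * K * t^2 \<le> p * (Re a)^2"
proof -
  have small: "t \<le> 1/2" "K * t^2 \<le> t / 2"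
    using small_time_bounds[OF t(1) K t(2)] .
  then have Kt2: "K * t^2 \<le> 1/2" "0 \<le> K * t^2"
    using t K by auto
  have Re_a: "1 - K * t^2 \<le> Re a"
    using abs_Re_le_cmod[of "a - (1 - \<i> * complex_of_real (d * t))"] ha by simp
  then show "0 \<le> Re a"
    using Kt2 by linarith
  have "(1 - K * t^2)^2 = 1 - 2 * (K * t^2) + (K * t^2)^2"
    by (simp add: power2_eq_square algebra_simps)
  then have "1 - 2 * (K * t^2) \<le> (1 - K * t^2)^2"
    using zero_le_power2[of "K * t^2"] by linarith
  also have "\<dots> \<le> (Re a)^2"
    using Re_a Kt2 by (intro power_mono) auto
  finally have "p * (1 - 2 * (K * t^2)) \<le> p * (Re a)^2"
    using p by (rule mult_left_mono)
  moreover have "p \<le> 2"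
    using hp Kt2 mult_nonneg_nonneg[OF d t(1)] by linarith
  then have "p * (2 * (K * t^2)) \<le> 2 * (2 * (K * t^2))"
    using Kt2 by (intro mult_right_mono) auto
  ultimately show "1 - d * t - 5 * K * t^2 \<le> p * (Re a)^2"
    using hp by (simp add: algebra_simps)
qed

lemma diagonal_term_upper:
  fixes p t d K N :: real and a :: complex
  assumes t: "0 \<le> t" "K * t \<le> 1/2" and K: "1 \<le> K" and d: "0 \<le> d" "d \<le> N" and p: "0 \<le> p"
    and hp: "\<bar>p - (1 - d * t)\<bar> \<le> K * t^2"
    and ha: "cmod (a - (1 - \<i> * complex_of_real (d * t))) \<le> K * t^2"
  shows "p * (cmod a)^2 \<le> 1 - d * t + (K + 2 * (3 * K + (N + K)^2)) * t^2"
proof -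
  define r where "r = a - (1 - \<i> * complex_of_real (d * t))"
  define A where "A = 3 * K + (N + K)^2"
  have small: "t \<le> 1/2" "K * t^2 \<le> t / 2"
    using small_time_bounds[OF t(1) K t(2)] .
  then have Kt2: "K * t^2 \<le> 1" "0 \<le> K * t^2"
    using t K by auto
  have r: "\<bar>Re r\<bar> \<le> K * t^2" "\<bar>Im r\<bar> \<le> K * t^2"
    using ha abs_Re_le_cmod[of r] abs_Im_le_cmod[of r] by (auto simp: r_def)
  have "(K * t^2)^2 \<le> K * t^2"
    using Kt2 by (simp add: power2_eq_square mult_left_le_one_le)
  moreover have "(Re a)^2 \<le> (1 + K * t^2)^2"
    using r Kt2 by (intro power_mono) (auto simp: r_def)
  ultimately have Re2: "(Re a)^2 \<le> 1 + 3 * K * t^2"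
    by (simp add: power2_eq_square algebra_simps)
  have "t^2 \<le> t"
    using t small by (simp add: power2_eq_square mult_left_le_one_le)
  then have "K * t^2 \<le> K * t"
    using K by (simp add: mult_left_mono)
  moreover have "d * t \<le> N * t"
    using d t by (simp add: mult_right_mono)
  ultimately have "\<bar>Im a\<bar> \<le> (N + K) * t"
    using r(2) mult_nonneg_nonneg[OF d(1) t(1)] by (simp add: r_def algebra_simps)
  then have "(Im a)^2 \<le> (N + K)^2 * t^2"
    by (metis abs_ge_zero power2_abs power_mono power_mult_distrib)
  moreover have "A * t^2 = 3 * K * t^2 + (N + K)^2 * t^2"
    by (simp add: A_def algebra_simps)
  ultimately have "(cmod a)^2 \<le> 1 + A * t^2"
    using Re2 unfolding cmod_power2 by linarith
  then have "p * (cmod a)^2 \<le> p * (1 + A * t^2)"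
    using p by (rule mult_left_mono)
  also have "\<dots> = p + p * (A * t^2)"
    by (simp add: distrib_left)
  also have "p * (A * t^2) \<le> 2 * (A * t^2)"
    using hp Kt2 mult_nonneg_nonneg[OF d(1) t(1)] K
    by (intro mult_right_mono) (auto simp: A_def)
  finally show ?thesis
    using hp by (simp add: A_def algebra_simps)
qed

lemma offdiagonal_term_upper:
  fixes p t l K :: real and a :: complex
  assumes t: "0 \<le> t" "K * t \<le> 1/2" and K: "1 \<le> K" and l: "0 \<le> l" "l \<le> 1" and p: "0 \<le> p"
    and hp: "\<bar>p - t * l\<bar> \<le> K * t^2"
    and ha: "cmod (a - \<i> * complex_of_real (t * l)) \<le> K * t^2"
  shows "p * (cmod a)^2 \<le> 8 * t^2"
proof -
  have Kt2: "K * t^2 \<le> t / 2" and "t \<le> 1/2"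
    using small_time_bounds[OF t(1) K t(2)] by auto
  then have t1: "t \<le> 1"
    by simp
  have tl: "0 \<le> t * l" "t * l \<le> t"
    using t l by (auto simp: mult_left_le)
  have "p \<le> 2 * t"
    using hp tl Kt2 by linarith
  moreover have "cmod a \<le> t * l + K * t^2"
    using norm_triangle_ineq[of "\<i> * complex_of_real (t * l)" "a - \<i> * complex_of_real (t * l)"] ha tl
    by (simp add: norm_mult)
  then have "cmod a \<le> 2 * t"
    using tl Kt2 by linarith
  ultimately have "p * (cmod a)^2 \<le> (2 * t) * (2 * t)^2"
    using p by (intro mult_mono power_mono) auto
  also have "\<dots> \<le> 8 * t^2"
    using t t1 by (simp add: power2_eq_square mult_left_le_one_le)
  finally show ?thesis .
qed

section \<open>Short-time expansion of the two walks\<close>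

lemma laplacian_entry [simp]:
  "laplacian E $ i $ j = (if i = j then - real (degree E i) else if E i j then 1 else 0)"
  by (simp add: laplacian_def)

lemma degree_le_card: "real (degree E j) \<le> real CARD('n)"
  for E :: "'n::finite \<Rightarrow> 'n \<Rightarrow> bool"
  unfolding degree_def by (simp add: card_mono)

lemma abs_laplacian_entry_le: "\<bar>laplacian E $ i $ j\<bar> \<le> real CARD('n)"
  for E :: "'n::finite \<Rightarrow> 'n \<Rightarrow> bool"
  using degree_le_card[of E i] by (auto simp: Suc_le_eq)

lemma pC_nonneg: "0 \<le> t \<Longrightarrow> 0 \<le> pC E t k j"
  unfolding pC_def by (rule mexp_nonneg_if_offdiag_nonneg) auto

lemma exp_remainder_le:
  fixes N t :: real
  assumes "0 \<le> N" "0 \<le> t" "t \<le> 1"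
  shows "(N * (t * N))^2 * exp (N * (t * N)) \<le> N^4 * exp (N^2) * t^2"
proof -
  have "exp (N * (t * N)) \<le> exp (N^2)"
    using mult_right_mono[OF assms(3), of "N * N"] assms(1) by (simp add: power2_eq_square algebra_simps)
  then have "(N * (t * N))^2 * exp (N * (t * N)) \<le> (N * (t * N))^2 * exp (N^2)"
    by (rule mult_left_mono) simp
  also have "\<dots> = N^4 * exp (N^2) * t^2"
    by (simp add: power2_eq_square power4_eq_xxxx)
  finally show ?thesis .
qed

lemma pC_second_order:
  fixes E :: "'n::finite \<Rightarrow> 'n \<Rightarrow> bool"
  assumes "0 \<le> t" "t \<le> 1"
  shows "\<bar>pC E t k j - mat 1 $ k $ j - t * laplacian E $ k $ j\<bar>
    \<le> real CARD('n)^4 * exp (real CARD('n)^2) * t^2"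
proof -
  have "norm ((t *\<^sub>R laplacian E) $ i $ l) \<le> t * real CARD('n)" for i l
    using abs_laplacian_entry_le[of E i l] assms(1) by (simp add: abs_mult mult_left_mono)
  from mexp_entry_second_order[OF this, of k j] show ?thesis
    using exp_remainder_le[of "real CARD('n)" t] assms by (simp add: pC_def)
qed

lemma alphaQ_second_order:
  fixes E :: "'n::finite \<Rightarrow> 'n \<Rightarrow> bool"
  assumes "0 \<le> t" "t \<le> 1"
  shows "cmod (alphaQ E t k j - mat 1 $ k $ j - \<i> * complex_of_real (t * laplacian E $ k $ j))
    \<le> real CARD('n)^4 * exp (real CARD('n)^2) * t^2"
proof -
  define Q :: "complex^'n^'n" where
    "Q = (\<chi> i l. \<i> * complex_of_real t * complex_of_real (laplacian E $ i $ l))"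
  have "norm (Q $ i $ l) \<le> t * real CARD('n)" for i l
    using abs_laplacian_entry_le[of E i l] assms(1)
    by (simp add: Q_def norm_mult abs_mult mult_left_mono)
  from mexp_entry_second_order[OF this, of k j] show ?thesis
    using exp_remainder_le[of "real CARD('n)" t] assms by (simp add: alphaQ_def UQ_def Q_def mult.assoc)
qed

lemma expansion_constant_ge_1: "1 \<le> real CARD('n::finite)^4 * exp (real CARD('n)^2)"
proof -
  have "1 \<le> real CARD('n)"
    by (simp add: Suc_le_eq)
  then have "1 * 1 \<le> real CARD('n)^4 * exp (real CARD('n)^2)"
    by (intro mult_mono one_le_power) auto
  then show ?thesis
    by simp
qed

lemma eventually_small_time: "\<forall>\<^sub>F t in at_right 0. 0 < t \<and> K * t \<le> 1/2"
  for K :: real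
proof -
  have "((\<lambda>t. K * t) \<longlongrightarrow> 0) (at_right 0)"
    by (intro tendsto_eq_intros) auto
  then have "\<forall>\<^sub>F t in at_right 0. K * t < 1/2"
    by (rule order_tendstoD) simp
  then show ?thesis
    using eventually_at_right_less by eventually_elim auto
qed

lemma diagonal_terms_asymptotics:
  fixes E :: "'n::finite \<Rightarrow> 'n \<Rightarrow> bool"
  obtains C where "\<forall>\<^sub>F t in at_right 0. \<forall>j. 0 \<le> Re (alphaQ E t j j)
      \<and> 1 - real (degree E j) * t - C * t^2 \<le> pC E t j j * (Re (alphaQ E t j j))^2
      \<and> pC E t j j * (cmod (alphaQ E t j j))^2 \<le> 1 - real (degree E j) * t + C * t^2"
proof -
  define N where "N = real CARD('n)"
  define K where "K = N^4 * exp (N^2)"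
  define C where "C = K + 2 * (3 * K + (N + K)^2)"
  have K: "1 \<le> K"
    unfolding K_def N_def by (rule expansion_constant_ge_1)
  have "0 \<le> Re (alphaQ E t j j)
      \<and> 1 - real (degree E j) * t - C * t^2 \<le> pC E t j j * (Re (alphaQ E t j j))^2
      \<and> pC E t j j * (cmod (alphaQ E t j j))^2 \<le> 1 - real (degree E j) * t + C * t^2"
    if t: "0 < t" "K * t \<le> 1/2" for t j
  proof -
    have "t \<le> 1"
      using small_time_bounds(1)[OF _ K t(2)] t(1) by simp
    then have hp: "\<bar>pC E t j j - (1 - real (degree E j) * t)\<bar> \<le> K * t^2"
      and ha: "cmod (alphaQ E t j j - (1 - \<i> * complex_of_real (real (degree E j) * t))) \<le> K * t^2"
      using pC_second_order[of t E j j] alphaQ_second_order[of t E j j] t(1)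
      by (simp_all add: K_def N_def mat_def algebra_simps)
    have t0: "0 \<le> t"
      using t(1) by simp
    note lower = diagonal_term_lower[OF t0 t(2) K of_nat_0_le_iff pC_nonneg[OF t0] hp ha]
    have "5 * K * t^2 \<le> C * t^2"
      using K by (intro mult_right_mono) (simp_all add: C_def)
    moreover have "pC E t j j * (cmod (alphaQ E t j j))^2 \<le> 1 - real (degree E j) * t + C * t^2"
      using diagonal_term_upper[OF t0 t(2) K of_nat_0_le_iff degree_le_card pC_nonneg[OF t0] hp ha]
      by (simp add: C_def N_def)
    ultimately show ?thesis
      using lower by linarith
  qed
  then show ?thesis
    using eventually_small_time[of K] by (intro that[of C]) (auto elim: eventually_mono)
qed

lemma offdiagonal_terms_asymptotics:
  fixes E :: "'n::finite \<Rightarrow> 'n \<Rightarrow> bool"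
  shows "\<forall>\<^sub>F t in at_right 0. \<forall>k j. k \<noteq> j \<longrightarrow> pC E t k j * (cmod (alphaQ E t k j))^2 \<le> 8 * t^2"
proof -
  define N where "N = real CARD('n)"
  define K where "K = N^4 * exp (N^2)"
  have K: "1 \<le> K"
    unfolding K_def N_def by (rule expansion_constant_ge_1)
  have "pC E t k j * (cmod (alphaQ E t k j))^2 \<le> 8 * t^2"
    if t: "0 < t" "K * t \<le> 1/2" and "k \<noteq> j" for t k j
  proof -
    define l :: real where "l = (if E k j then 1 else 0)"
    have "t \<le> 1"
      using small_time_bounds(1)[OF _ K t(2)] t(1) by simp
    then have "\<bar>pC E t k j - t * l\<bar> \<le> K * t^2"
      and "cmod (alphaQ E t k j - \<i> * complex_of_real (t * l)) \<le> K * t^2"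
      using pC_second_order[of t E k j] alphaQ_second_order[of t E k j] t(1) \<open>k \<noteq> j\<close>
      by (simp_all add: K_def N_def mat_def l_def)
    then show ?thesis
      using t(1) by (intro offdiagonal_term_upper[OF _ t(2) K _ _ pC_nonneg]) (auto simp: l_def)
  qed
  then show ?thesis
    using eventually_small_time[of K] by (auto elim: eventually_mono)
qed

section \<open>The conditional and the full QC-distance\<close>

lemma Fj_eq_sum: "0 \<le> t \<Longrightarrow> Fj E t j = (\<Sum>k\<in>UNIV. pC E t k j * (cmod (alphaQ E t k j))^2)"
  unfolding Fj_def ECj_def EQj_def
  by (rule fidelity_diag_pure[where a="\<lambda>k. alphaQ E t k j", simplified]) (rule pC_nonneg)

lemma Fj_bounds:
  fixes E :: "'n::finite \<Rightarrow> 'n \<Rightarrow> bool"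
  assumes t: "0 \<le> t"
    and diag: "1 - real (degree E j) * t - C * t^2 \<le> pC E t j j * (Re (alphaQ E t j j))^2"
      "pC E t j j * (cmod (alphaQ E t j j))^2 \<le> 1 - real (degree E j) * t + C * t^2"
    and off: "\<And>k. k \<noteq> j \<Longrightarrow> pC E t k j * (cmod (alphaQ E t k j))^2 \<le> 8 * t^2"
  shows "\<bar>Fj E t j - (1 - real (degree E j) * t)\<bar> \<le> (C + 8 * real CARD('n)) * t^2"
proof -
  define contrib where "contrib k = pC E t k j * (cmod (alphaQ E t k j))^2" for k
  have F: "Fj E t j = contrib j + (\<Sum>k\<in>UNIV - {j}. contrib k)"
    using t by (simp add: Fj_eq_sum contrib_def sum.remove)
  have "(Re (alphaQ E t j j))^2 \<le> (cmod (alphaQ E t j j))^2"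
    using abs_Re_le_cmod by (metis abs_ge_zero power2_abs power_mono)
  then have "pC E t j j * (Re (alphaQ E t j j))^2 \<le> contrib j"
    unfolding contrib_def using pC_nonneg[OF t] by (rule mult_left_mono)
  moreover have "0 \<le> (\<Sum>k\<in>UNIV - {j}. contrib k)"
    unfolding contrib_def using pC_nonneg[OF t] by (intro sum_nonneg mult_nonneg_nonneg) simp_all
  moreover have "(\<Sum>k\<in>UNIV - {j}. contrib k) \<le> (\<Sum>k\<in>(UNIV::'n set) - {j}. 8 * t^2)"
    using off unfolding contrib_def by (intro sum_mono) simp
  moreover have "(\<Sum>k\<in>(UNIV::'n set) - {j}. 8 * t^2) \<le> 8 * real CARD('n) * t^2"
    by (simp add: card_Diff_subset mult_right_mono)
  moreover have "(C + 8 * real CARD('n)) * t^2 = C * t^2 + 8 * real CARD('n) * t^2"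
    "0 \<le> 8 * real CARD('n) * t^2"
    by (simp_all add: algebra_simps)
  ultimately show ?thesis
    using diag unfolding F abs_le_iff contrib_def by linarith
qed

lemma Fj_asymptotics:
  fixes E :: "'n::finite \<Rightarrow> 'n \<Rightarrow> bool"
  obtains C where "\<forall>\<^sub>F t in at_right 0. \<forall>j. \<bar>Fj E t j - (1 - real (degree E j) * t)\<bar> \<le> C * t^2"
proof -
  obtain C where "\<forall>\<^sub>F t in at_right 0. \<forall>j. 0 \<le> Re (alphaQ E t j j)
      \<and> 1 - real (degree E j) * t - C * t^2 \<le> pC E t j j * (Re (alphaQ E t j j))^2
      \<and> pC E t j j * (cmod (alphaQ E t j j))^2 \<le> 1 - real (degree E j) * t + C * t^2"
    using diagonal_terms_asymptotics by blast
  with eventually_at_right_less offdiagonal_terms_asymptotics[of E]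
  have "\<forall>\<^sub>F t in at_right 0. \<forall>j.
      \<bar>Fj E t j - (1 - real (degree E j) * t)\<bar> \<le> (C + 8 * real CARD('n)) * t^2"
    by eventually_elim (simp add: Fj_bounds)
  then show ?thesis
    by (rule that)
qed

lemma vertex_state_in_prob_vecs: "(\<lambda>i. if i = j then 1 else 0) \<in> prob_vecs"
  unfolding prob_vecs_def by simp

lemma fidelity_vertex_state:
  "fidelity (ECl E t (\<lambda>i. if i = j then 1 else 0))
      (EQu E t (diagM (\<lambda>i. complex_of_real (if i = j then 1 else 0)))) = Fj E t j"
proof -
  have "ECl E t (\<lambda>i. if i = j then 1 else 0) = ECj E t j"
    by (simp add: ECl_def ECj_def if_distrib if_distribR cong: if_cong)
  moreover have "EQu E t (diagM (\<lambda>i. complex_of_real (if i = j then 1 else 0))) = EQj E t j"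
  proof -
    have "(UQ E t ** diagM (\<lambda>i. complex_of_real (if i = j then 1 else 0)) ** adjointM (UQ E t)) $ k $ l
        = (\<Sum>m\<in>UNIV. UQ E t $ k $ m * complex_of_real (if m = j then 1 else 0) * cnj (UQ E t $ l $ m))"
      for k l
      unfolding matrix_matrix_mult_def[of "UQ E t ** _"] by (simp add: diagM_mult_right adjointM_def)
    also have "\<dots> k l = (\<Sum>m\<in>UNIV. if m = j then UQ E t $ k $ m * cnj (UQ E t $ l $ m) else 0)" for k l
      by (intro sum.cong) auto
    finally show ?thesis
      by (simp add: EQu_def EQj_def vec_eq_iff alphaQ_def)
  qed
  ultimately show ?thesis
    by (simp add: Fj_def)
qed

lemma fidelity_channels_ge:
  assumes t: "0 \<le> t" and q: "q \<in> prob_vecs" and m: "0 \<le> m"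
    and diag: "\<And>k. 0 \<le> Re (alphaQ E t k k)" "\<And>k. m \<le> sqrt (pC E t k k) * Re (alphaQ E t k k)"
  shows "m^2 \<le> fidelity (ECl E t q) (EQu E t (diagM (\<lambda>j. complex_of_real (q j))))"
proof -
  have q0: "\<And>k. 0 \<le> q k" and q1: "(\<Sum>k\<in>UNIV. q k) = 1"
    using q by (auto simp: prob_vecs_def)
  define c where "c k = (\<Sum>j\<in>UNIV. pC E t k j * q j)" for k
  have c0: "0 \<le> c k" for k
    unfolding c_def using pC_nonneg[OF t] q0 by (intro sum_nonneg mult_nonneg_nonneg)
  have "m * q k \<le> sqrt (q k) * sqrt (c k) * Re (UQ E t $ k $ k)" for k
  proof -
    have "pC E t k k * q k \<le> c k"
      unfolding c_def using pC_nonneg[OF t] q0 by (intro member_le_sum mult_nonneg_nonneg) simp_all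
    then have "sqrt (q k) * sqrt (pC E t k k) \<le> sqrt (c k)"
      by (simp add: mult.commute flip: real_sqrt_mult)
    then have "sqrt (q k) * (sqrt (q k) * sqrt (pC E t k k)) * Re (alphaQ E t k k)
        \<le> sqrt (q k) * sqrt (c k) * Re (alphaQ E t k k)"
      using diag(1)[of k] q0[of k] by (intro mult_right_mono mult_left_mono) auto
    moreover have "sqrt (q k) * (sqrt (q k) * sqrt (pC E t k k)) = q k * sqrt (pC E t k k)"
      using q0[of k] by (simp add: mult.assoc[symmetric])
    ultimately have "q k * (sqrt (pC E t k k) * Re (alphaQ E t k k))
        \<le> sqrt (q k) * sqrt (c k) * Re (alphaQ E t k k)"
      by (simp add: mult.assoc)
    moreover have "m * q k \<le> q k * (sqrt (pC E t k k) * Re (alphaQ E t k k))"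
      using mult_left_mono[OF diag(2) q0] by (simp add: mult.commute)
    ultimately show ?thesis
      by (simp add: alphaQ_def)
  qed
  then show ?thesis
    unfolding ECl_def EQu_def c_def[symmetric] by (rule fidelity_diag_conj_ge[OF c0 q0 q1 m])
qed

lemma bigo_square_at_right_0I:
  fixes f :: "real \<Rightarrow> real"
  assumes "\<forall>\<^sub>F t in at_right 0. \<bar>f t\<bar> \<le> C * t^2"
  shows "f \<in> O[at_right 0](\<lambda>t. t^2)"
  using assms by (intro bigoI[where c=C]) (auto elim: eventually_mono)

lemma DQC_cond_asymptotics:
  fixes E :: "'n::finite \<Rightarrow> 'n \<Rightarrow> bool"
  shows "(\<lambda>t. DQC_cond E t j - real (degree E j) * t) \<in> O[at_right 0](\<lambda>t. t^2)"
proof -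
  obtain C where "\<forall>\<^sub>F t in at_right 0. \<forall>j. \<bar>Fj E t j - (1 - real (degree E j) * t)\<bar> \<le> C * t^2"
    using Fj_asymptotics by blast
  moreover have "\<bar>DQC_cond E t j - real (degree E j) * t\<bar> = \<bar>Fj E t j - (1 - real (degree E j) * t)\<bar>"
    for t
    unfolding DQC_cond_def by arith
  ultimately show ?thesis
    by (intro bigo_square_at_right_0I[where C=C]) (auto elim!: eventually_mono)
qed

lemma average_DQC_cond_asymptotics:
  fixes E :: "'n::finite \<Rightarrow> 'n \<Rightarrow> bool"
  shows "(\<lambda>t. (\<Sum>j\<in>UNIV. DQC_cond E t j) / real CARD('n)
           - ((\<Sum>j\<in>UNIV. real (degree E j)) / real CARD('n)) * t) \<in> O[at_right 0](\<lambda>t. t^2)"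
proof -
  have "(\<lambda>t. (\<Sum>j\<in>UNIV. DQC_cond E t j - real (degree E j) * t) / real CARD('n)) \<in> O[at_right 0](\<lambda>t. t^2)"
    by (simp add: big_sum_in_bigo DQC_cond_asymptotics)
  then show ?thesis
    by (simp add: sum_subtractf sum_distrib_right diff_divide_distrib)
qed

lemma INF_fidelity_le_Fj:
  "(INF q\<in>prob_vecs. fidelity (ECl E t q) (EQu E t (diagM (\<lambda>j. complex_of_real (q j))))) \<le> Fj E t j"
proof -
  have "bdd_below ((\<lambda>q. fidelity (ECl E t q) (EQu E t (diagM (\<lambda>j. complex_of_real (q j))))) ` prob_vecs)"
    by (rule bdd_belowI[where m=0]) (auto simp: fidelity_def)
  from cINF_lower[OF this vertex_state_in_prob_vecs] show ?thesis
    by (simp add: fidelity_vertex_state)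
qed

lemma INF_fidelity_ge:
  assumes t: "0 \<le> t" and b: "0 \<le> b"
    and diag: "\<And>k. 0 \<le> Re (alphaQ E t k k)" "\<And>k. b \<le> pC E t k k * (Re (alphaQ E t k k))^2"
  shows "b \<le> (INF q\<in>prob_vecs. fidelity (ECl E t q) (EQu E t (diagM (\<lambda>j. complex_of_real (q j)))))"
proof (rule cINF_greatest)
  show "prob_vecs \<noteq> {}"
    using vertex_state_in_prob_vecs by blast
  have sqrt_le: "sqrt b \<le> sqrt (pC E t k k) * Re (alphaQ E t k k)" for k
    using real_sqrt_le_mono[OF diag(2)[of k]] diag(1)[of k] by (simp add: real_sqrt_mult)
  show "b \<le> fidelity (ECl E t q) (EQu E t (diagM (\<lambda>j. complex_of_real (q j))))"
    if "q \<in> prob_vecs" for q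
    using fidelity_channels_ge[OF t that real_sqrt_ge_zero[OF b] diag(1) sqrt_le] b by simp
qed

lemma DQC_asymptotics:
  fixes E :: "'n::finite \<Rightarrow> 'n \<Rightarrow> bool"
  shows "(\<lambda>t. DQC E t - real (Max (range (degree E))) * t) \<in> O[at_right 0](\<lambda>t. t^2)"
proof -
  define D where "D = real (Max (range (degree E)))"
  obtain C1 where diag: "\<forall>\<^sub>F t in at_right 0. \<forall>j. 0 \<le> Re (alphaQ E t j j)
      \<and> 1 - real (degree E j) * t - C1 * t^2 \<le> pC E t j j * (Re (alphaQ E t j j))^2
      \<and> pC E t j j * (cmod (alphaQ E t j j))^2 \<le> 1 - real (degree E j) * t + C1 * t^2"
    using diagonal_terms_asymptotics by blast
  obtain C2 where F: "\<forall>\<^sub>F t in at_right 0. \<forall>j. \<bar>Fj E t j - (1 - real (degree E j) * t)\<bar> \<le> C2 * t^2"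
    using Fj_asymptotics by blast
  have "Max (range (degree E)) \<in> range (degree E)"
    by (rule Max_in) auto
  then obtain jm where jm: "real (degree E jm) = D"
    unfolding D_def by (metis rangeE)
  have "((\<lambda>t. 1 - D * t - C1 * t^2) \<longlongrightarrow> 1) (at_right 0)"
    by (auto intro!: tendsto_eq_intros)
  then have "\<forall>\<^sub>F t in at_right 0. 0 < 1 - D * t - C1 * t^2"
    by (rule order_tendstoD) simp
  with eventually_at_right_less diag F
  have "\<forall>\<^sub>F t in at_right 0. \<bar>DQC E t - D * t\<bar> \<le> (\<bar>C1\<bar> + \<bar>C2\<bar>) * t^2"
  proof eventually_elim
    case (elim t)
    have deg: "real (degree E k) * t \<le> D * t" for k
      using elim by (simp add: D_def mult_right_mono)
    have "1 - D * t - C1 * t^2 \<le> pC E t k k * (Re (alphaQ E t k k))^2" for k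
      using spec[OF elim(2), of k] deg[of k] by linarith
    then have "1 - D * t - C1 * t^2
        \<le> (INF q\<in>prob_vecs. fidelity (ECl E t q) (EQu E t (diagM (\<lambda>j. complex_of_real (q j)))))"
      using elim by (intro INF_fidelity_ge) auto
    moreover have "Fj E t jm \<le> 1 - D * t + C2 * t^2"
      using spec[OF elim(3), of jm] jm by (simp add: abs_le_iff)
    moreover have "C1 * t^2 \<le> (\<bar>C1\<bar> + \<bar>C2\<bar>) * t^2" "C2 * t^2 \<le> (\<bar>C1\<bar> + \<bar>C2\<bar>) * t^2"
      by (simp_all add: mult_right_mono)
    ultimately show ?case
      using INF_fidelity_le_Fj[of E t jm] unfolding DQC_def abs_le_iff by linarith
  qed
  then show ?thesis
    unfolding D_def by (rule bigo_square_at_right_0I)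
qed

theorem mainTheorem2:
  fixes E :: "'n::finite \<Rightarrow> 'n \<Rightarrow> bool"
  assumes "simple_graph E"
  shows "(\<forall>j. \<forall>t\<ge>0. Fj E t j = (\<Sum>k\<in>UNIV. pC E t k j * (cmod (alphaQ E t k j))^2))
    \<and> (\<forall>j. (\<lambda>t. DQC_cond E t j - real (degree E j) * t) \<in> O[at_right 0](\<lambda>t. t^2))
    \<and> (\<lambda>t. DQC E t - real (Max (range (degree E))) * t) \<in> O[at_right 0](\<lambda>t. t^2)
    \<and> (\<lambda>t. (\<Sum>j\<in>UNIV. DQC_cond E t j) / real CARD('n)
           - ((\<Sum>j\<in>UNIV. real (degree E j)) / real CARD('n)) * t) \<in> O[at_right 0](\<lambda>t. t^2)"
  using Fj_eq_sum DQC_cond_asymptotics DQC_asymptotics average_DQC_cond_asymptotics by blast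

end
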